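(* Let $D$ be a bounded domain of $\mathbb{C}^n$ and let $V$ be a closed complex submanifold of $D$ biholomorphic to the unit disc $\Delta$. The following are equivalent: (i) $V$ is the image of a holomorphic retraction $\rho:D\to D$ (holomorphic with $\rho\circ\rho=\rho$); (ii) $V$ is the image of a complex geodesic $\varphi:\Delta\to D$; (iii) $c_D(x,y)=c_V(x,y)$ for all $x,y\in V$; (iv) there exist two distinct points $x,y\in V$ with $c_D(x,y)=c_V(x,y)$; (v) $E_D(x,v)=E_V(x,v)$ for all $x\in V$ and $v\in T_x(V)$; (vi) there exist $x\in V$ and $v\in T_x(V)$, $v\neq0$, with $E_D(x,v)=E_V(x,v)$.
   Context: $\Delta$ is the open unit disc of $\mathbb{C}$, $\omega(z,w)=\operatorname{artanh}\left|\frac{z-w}{1-\bar w z}\right|$ the Poincaré distance and $\alpha(z,v)=|v|/(1-|z|^2)$ the Poincaré metric. For a complex manifold $M$ (here $D$ or $V$) the Carathéodory pseudodistance is $c_M(z,w)=\sup\{\omega(g(z),g(w))\mid g:M\to\Delta\text{ holomorphic}\}$ and the Carathéodory (Reiffen) pseudometric is $E_M(z,v)=\sup\{\alpha(g(z),g'(z)v)\mid g:M\to\Delta\text{ holomorphic}\}$ for $v\in T_z(M)$. A complex geodesic of $D$ is a holomorphic $\varphi:\Delta\to D$ with $c_D(\varphi(\zeta),\varphi(\eta))=\omega(\zeta,\eta)$ for all $\zeta,\eta\in\Delta$. *)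

theory Defs
  imports "HOL-Analysis.Analysis"
begin

definition poincare_dist :: "complex \<Rightarrow> complex \<Rightarrow> real" where
  "poincare_dist z w = artanh (cmod ((z - w) / (1 - cnj w * z)))"

definition poincare_metric :: "complex \<Rightarrow> complex \<Rightarrow> real" where
  "poincare_metric z v = cmod v / (1 - (cmod z)\<^sup>2)"

definition holo_fun :: "(complex^'n) set \<Rightarrow> (complex^'n \<Rightarrow> complex) \<Rightarrow> bool" where
  "holo_fun D f \<longleftrightarrow> (\<forall>z\<in>D. \<exists>L. (f has_derivative L) (at z) \<and>
                       (\<forall>c x. L (c *s x) = c * L x))"

definition holo_map :: "(complex^'n) set \<Rightarrow> (complex^'n \<Rightarrow> complex^'m) \<Rightarrow> bool" where
  "holo_map D F \<longleftrightarrow> (\<forall>i. holo_fun D (\<lambda>z. F z $ i))"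

definition holo_disc_map :: "(complex \<Rightarrow> complex^'n) \<Rightarrow> bool" where
  "holo_disc_map \<phi> \<longleftrightarrow> (\<forall>i. (\<lambda>\<zeta>. \<phi> \<zeta> $ i) holomorphic_on ball 0 1)"

definition disc_map_deriv :: "(complex \<Rightarrow> complex^'n) \<Rightarrow> complex \<Rightarrow> complex^'n" where
  "disc_map_deriv \<phi> \<zeta> = (\<chi> i. deriv (\<lambda>t. \<phi> t $ i) \<zeta>)"

definition bounded_domain :: "(complex^'n) set \<Rightarrow> bool" where
  "bounded_domain D \<longleftrightarrow> open D \<and> connected D \<and> D \<noteq> {} \<and> bounded D"

text \<open>V is a closed complex submanifold of D biholomorphic to the disc, with
  psi : Delta -> V a biholomorphism, i.e. a holomorphic embedding (injective immersion,
  homeomorphism onto its image) of the disc into C^n with image V.\<close>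

definition disc_submanifold ::
  "(complex^'n) set \<Rightarrow> (complex^'n) set \<Rightarrow> (complex \<Rightarrow> complex^'n) \<Rightarrow> bool" where
  "disc_submanifold D V \<psi> \<longleftrightarrow>
     V \<subseteq> D \<and> closedin (top_of_set D) V \<and>
     holo_disc_map \<psi> \<and> \<psi> ` ball 0 1 = V \<and> inj_on \<psi> (ball 0 1) \<and>
     (\<forall>\<zeta>\<in>ball 0 1. disc_map_deriv \<psi> \<zeta> \<noteq> 0) \<and>
     (\<exists>\<psi>'. homeomorphism (ball 0 1) V \<psi> \<psi>')"

text \<open>Holomorphic functions V -> Delta (V with the complex structure given by psi).\<close>

definition holo_V_to_disc :: "(complex \<Rightarrow> complex^'n) \<Rightarrow> (complex^'n \<Rightarrow> complex) \<Rightarrow> bool" where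
  "holo_V_to_disc \<psi> g \<longleftrightarrow> g ` (\<psi> ` ball 0 1) \<subseteq> ball 0 1 \<and> (g \<circ> \<psi>) holomorphic_on ball 0 1"

definition holo_D_to_disc :: "(complex^'n) set \<Rightarrow> (complex^'n \<Rightarrow> complex) \<Rightarrow> bool" where
  "holo_D_to_disc D g \<longleftrightarrow> holo_fun D g \<and> g ` D \<subseteq> ball 0 1"

definition cara_dist_D :: "(complex^'n) set \<Rightarrow> complex^'n \<Rightarrow> complex^'n \<Rightarrow> real" where
  "cara_dist_D D z w = Sup {poincare_dist (g z) (g w) | g. holo_D_to_disc D g}"

definition cara_metric_D :: "(complex^'n) set \<Rightarrow> complex^'n \<Rightarrow> complex^'n \<Rightarrow> real" where
  "cara_metric_D D z v =
     Sup {poincare_metric (g z) (frechet_derivative g (at z) v) | g. holo_D_to_disc D g}"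

definition cara_dist_V :: "(complex \<Rightarrow> complex^'n) \<Rightarrow> complex^'n \<Rightarrow> complex^'n \<Rightarrow> real" where
  "cara_dist_V \<psi> z w = Sup {poincare_dist (g z) (g w) | g. holo_V_to_disc \<psi> g}"

text \<open>Tangent space of V = psi(Delta) at x, and the Caratheodory metric of V:
  for v = c * psi'(zeta) with psi(zeta) = x, dg_x(v) = c * (g o psi)'(zeta).\<close>

definition tangent_V :: "(complex \<Rightarrow> complex^'n) \<Rightarrow> complex^'n \<Rightarrow> (complex^'n) set" where
  "tangent_V \<psi> x = {c *s disc_map_deriv \<psi> \<zeta> | c \<zeta>. \<zeta> \<in> ball 0 1 \<and> \<psi> \<zeta> = x}"

definition cara_metric_V :: "(complex \<Rightarrow> complex^'n) \<Rightarrow> complex^'n \<Rightarrow> complex^'n \<Rightarrow> real" where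
  "cara_metric_V \<psi> x v =
     Sup {poincare_metric (g x) (c * deriv (g \<circ> \<psi>) \<zeta>) | g c \<zeta>.
            holo_V_to_disc \<psi> g \<and> \<zeta> \<in> ball 0 1 \<and> \<psi> \<zeta> = x \<and> v = c *s disc_map_deriv \<psi> \<zeta>}"

definition complex_geodesic :: "(complex^'n) set \<Rightarrow> (complex \<Rightarrow> complex^'n) \<Rightarrow> bool" where
  "complex_geodesic D \<phi> \<longleftrightarrow> holo_disc_map \<phi> \<and> \<phi> ` ball 0 1 \<subseteq> D \<and>
     (\<forall>\<zeta>\<in>ball 0 1. \<forall>\<eta>\<in>ball 0 1. cara_dist_D D (\<phi> \<zeta>) (\<phi> \<eta>) = poincare_dist \<zeta> \<eta>)"

definition holo_retraction :: "(complex^'n) set \<Rightarrow> (complex^'n \<Rightarrow> complex^'n) \<Rightarrow> bool" where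
  "holo_retraction D \<rho> \<longleftrightarrow> holo_map D \<rho> \<and> \<rho> ` D \<subseteq> D \<and> (\<forall>z\<in>D. \<rho> (\<rho> z) = \<rho> z)"

end

theory Submission
  imports Defs "HOL-Complex_Analysis.Complex_Analysis"
begin

text \<open>For every holomorphic \<open>g : D \<rightarrow> \<Delta>\<close> the map \<open>g \<circ> \<psi>\<close> is a holomorphic self-map of the disc,
  so by Schwarz--Pick \<open>c\<^sub>D\<close> and \<open>E\<^sub>D\<close> are bounded on \<open>V\<close> by the Poincar\'e distance and metric
  transported by \<open>\<psi>\<close>, and \<open>c\<^sub>V\<close>, \<open>E\<^sub>V\<close> are equal to them (take \<open>g = \<psi>\<^sup>-\<^sup>1\<close>). Hence every one
  of the six conditions is equivalent to the existence of a holomorphic \<open>g : D \<rightarrow> \<Delta>\<close> with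
  \<open>g \<circ> \<psi> = id\<close>: such a \<open>g\<close> yields the retraction \<open>\<psi> \<circ> g\<close>, and a retraction \<open>\<rho>\<close> yields
  \<open>g = \<psi>\<^sup>-\<^sup>1 \<circ> \<rho>\<close>, holomorphic because \<open>\<psi>\<^sup>-\<^sup>1\<close> is locally a holomorphic function of one
  coordinate. For (iv) and (vi), Montel's theorem provides an extremal function for \<open>c\<^sub>D(x,y)\<close>,
  resp. \<open>E\<^sub>D(x;v)\<close>; equality in Schwarz--Pick makes \<open>g \<circ> \<psi>\<close> a disc automorphism, and
  composing \<open>g\<close> with its inverse gives the left inverse.\<close>

lemma has_derivative_vec_componentwise:
  fixes f :: "'a::real_normed_vector \<Rightarrow> 'b::real_normed_vector^'n"
  assumes "\<And>i. ((\<lambda>x. f x $ i) has_derivative (\<lambda>h. f' h $ i)) F" "bounded_linear f'"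
  shows "(f has_derivative f') F"
  using assms unfolding has_derivative_def
  by (auto intro!: vec_tendstoI)

lemma bounded_linear_vec_smult: "bounded_linear (\<lambda>c::complex. c *s (v::complex^'n))"
  by (rule linear_conv_bounded_linear[THEN iffD1], rule linearI) (auto simp: vec_eq_iff algebra_simps)

lemma norm_vec_smult:
  fixes c :: "'a::real_normed_div_algebra"
  shows "norm (c *s (x::'a^'n)) = norm c * norm x"
  unfolding norm_vec_def by (simp add: L2_set_right_distrib norm_mult)

lemma vec_smult_cancel_right:
  fixes v :: "'a::idom^'n"
  assumes "c *s v = c' *s v" "v \<noteq> 0"
  shows "c = c'"
proof -
  obtain j where "v $ j \<noteq> 0" using assms(2) by (metis vec_eq_iff zero_index)
  moreover have "c * v $ j = c' * v $ j" using assms(1) by (metis vector_smult_component)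
  ultimately show ?thesis by simp
qed

lemma holo_funD:
  assumes "holo_fun D g" "z \<in> D"
  shows "(g has_derivative frechet_derivative g (at z)) (at z)"
    and "frechet_derivative g (at z) (c *s x) = c * frechet_derivative g (at z) x"
proof -
  obtain L where L: "(g has_derivative L) (at z)" "\<And>c x. L (c *s x) = c * L x"
    using assms unfolding holo_fun_def by blast
  have "L = frechet_derivative g (at z)" using L(1) by (rule frechet_derivative_at)
  then show "(g has_derivative frechet_derivative g (at z)) (at z)"
     "frechet_derivative g (at z) (c *s x) = c * frechet_derivative g (at z) x"
    using L by auto
qed

lemma holo_fun_subset: "holo_fun D g \<Longrightarrow> E \<subseteq> D \<Longrightarrow> holo_fun E g"
  unfolding holo_fun_def by blast

lemma holo_fun_const: "holo_fun D (\<lambda>z. c)"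
  unfolding holo_fun_def by (auto intro!: exI[of _ "\<lambda>_. 0"])

lemma holo_fun_imp_continuous_on: "holo_fun D g \<Longrightarrow> continuous_on D g"
  by (meson continuous_at_imp_continuous_on has_derivative_continuous holo_funD(1))

lemma holo_fun_diff:
  assumes "holo_fun D f" "holo_fun D g"
  shows "holo_fun D (\<lambda>z. f z - g z)"
    and "z \<in> D \<Longrightarrow> frechet_derivative (\<lambda>z. f z - g z) (at z) h =
                     frechet_derivative f (at z) h - frechet_derivative g (at z) h"
proof -
  have d: "((\<lambda>z. f z - g z) has_derivative
             (\<lambda>h. frechet_derivative f (at z) h - frechet_derivative g (at z) h)) (at z)"
    if "z \<in> D" for z
    using holo_funD(1)[OF assms(1) that] holo_funD(1)[OF assms(2) that] by (rule has_derivative_diff)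
  show "holo_fun D (\<lambda>z. f z - g z)"
    unfolding holo_fun_def
  proof
    fix z assume z: "z \<in> D"
    show "\<exists>L. ((\<lambda>z. f z - g z) has_derivative L) (at z) \<and> (\<forall>c x. L (c *s x) = c * L x)"
      using d[OF z] holo_funD(2)[OF assms(1) z] holo_funD(2)[OF assms(2) z]
      by (intro exI[of _ "\<lambda>h. frechet_derivative f (at z) h - frechet_derivative g (at z) h"])
         (auto simp: algebra_simps)
  qed
  show "frechet_derivative (\<lambda>z. f z - g z) (at z) h =
          frechet_derivative f (at z) h - frechet_derivative g (at z) h" if "z \<in> D"
    using fun_cong[OF frechet_derivative_at[OF d[OF that]], of h] by simp
qed

lemma holo_fun_has_field_derivative_on_line:
  assumes "holo_fun D g" "w + t *s h \<in> D"
  shows "((\<lambda>s. g (w + s *s h)) has_field_derivative frechet_derivative g (at (w + t *s h)) h) (at t)"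
proof -
  have "((\<lambda>s. w + s *s h) has_derivative (\<lambda>s. s *s h)) (at t)"
    using has_derivative_add[OF has_derivative_const
        bounded_linear_imp_has_derivative[OF bounded_linear_vec_smult, of h]]
    by simp
  from diff_chain_at[OF this holo_funD(1)[OF assms]]
  show ?thesis
    using holo_funD(2)[OF assms] unfolding has_field_derivative_def
    by (simp add: o_def mult_commute_abs)
qed

lemma holomorphic_comp_holo_fun_has_derivative:
  assumes "holo_fun D g" "g ` D \<subseteq> S" "open S" "m holomorphic_on S" "z \<in> D"
  shows "((m \<circ> g) has_derivative (\<lambda>h. deriv m (g z) * frechet_derivative g (at z) h)) (at z)"
proof -
  have "(m has_field_derivative deriv m (g z)) (at (g z))"
    using assms by (intro holomorphic_derivI) auto
  then have "((m \<circ> g) has_derivative ((*) (deriv m (g z)) \<circ> frechet_derivative g (at z))) (at z)"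
    unfolding has_field_derivative_def by (intro diff_chain_at holo_funD(1)[OF assms(1,5)])
  then show ?thesis by (simp add: o_def)
qed

lemma holo_fun_holomorphic_comp:
  assumes "holo_fun D g" "g ` D \<subseteq> S" "open S" "m holomorphic_on S"
  shows "holo_fun D (m \<circ> g)"
  unfolding holo_fun_def
proof
  fix z assume z: "z \<in> D"
  show "\<exists>L. ((m \<circ> g) has_derivative L) (at z) \<and> (\<forall>c x. L (c *s x) = c * L x)"
    using holomorphic_comp_holo_fun_has_derivative[OF assms z] holo_funD(2)[OF assms(1) z]
    by (intro exI[of _ "\<lambda>h. deriv m (g z) * frechet_derivative g (at z) h"]) auto
qed

lemma frechet_derivative_holomorphic_comp_holo_fun:
  assumes "holo_fun D g" "g ` D \<subseteq> S" "open S" "m holomorphic_on S" "z \<in> D"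
  shows "frechet_derivative (m \<circ> g) (at z) h = deriv m (g z) * frechet_derivative g (at z) h"
  using frechet_derivative_at[OF holomorphic_comp_holo_fun_has_derivative[OF assms]] by metis

lemma holo_map_imp_continuous_on: "holo_map D \<rho> \<Longrightarrow> continuous_on D \<rho>"
  using continuous_on_vec_lambda[of D "\<lambda>i z. \<rho> z $ i"]
  unfolding holo_map_def by (simp add: holo_fun_imp_continuous_on)

lemma holo_disc_map_imp_continuous_on: "holo_disc_map \<phi> \<Longrightarrow> continuous_on (ball 0 1) \<phi>"
  using continuous_on_vec_lambda[of "ball 0 1" "\<lambda>i z. \<phi> z $ i"]
  unfolding holo_disc_map_def by (simp add: holomorphic_on_imp_continuous_on)

lemma holo_disc_map_has_derivative:
  assumes "holo_disc_map \<psi>" "\<zeta> \<in> ball 0 1"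
  shows "(\<psi> has_derivative (\<lambda>t. t *s disc_map_deriv \<psi> \<zeta>)) (at \<zeta>)"
proof (rule has_derivative_vec_componentwise)
  fix i
  have "((\<lambda>x. \<psi> x $ i) has_field_derivative deriv (\<lambda>t. \<psi> t $ i) \<zeta>) (at \<zeta>)"
    using assms unfolding holo_disc_map_def by (intro holomorphic_derivI) auto
  then show "((\<lambda>x. \<psi> x $ i) has_derivative (\<lambda>h. (h *s disc_map_deriv \<psi> \<zeta>) $ i)) (at \<zeta>)"
    unfolding has_field_derivative_def disc_map_deriv_def
    by (simp add: mult.commute[of _ "deriv _ _"])
qed (rule bounded_linear_vec_smult)

lemma holo_fun_comp_disc_map_has_field_derivative:
  assumes "holo_fun D g" "holo_disc_map \<psi>" "\<psi> ` ball 0 1 \<subseteq> D" "\<zeta> \<in> ball 0 1"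
  shows "((g \<circ> \<psi>) has_field_derivative
           frechet_derivative g (at (\<psi> \<zeta>)) (disc_map_deriv \<psi> \<zeta>)) (at \<zeta>)"
proof -
  have z: "\<psi> \<zeta> \<in> D" using assms by auto
  from diff_chain_at[OF holo_disc_map_has_derivative[OF assms(2,4)] holo_funD(1)[OF assms(1) z]]
  show ?thesis
    using holo_funD(2)[OF assms(1) z] unfolding has_field_derivative_def
    by (simp add: o_def mult_commute_abs)
qed

lemma holo_fun_comp_disc_map_holomorphic:
  assumes "holo_fun D g" "holo_disc_map \<psi>" "\<psi> ` ball 0 1 \<subseteq> D"
  shows "(g \<circ> \<psi>) holomorphic_on ball 0 1"
  using holo_fun_comp_disc_map_has_field_derivative[OF assms]
  by (auto simp: holomorphic_on_open field_differentiable_def) blast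

text \<open>Restricted to the complex line through \<open>w\<close> in the direction \<open>u\<close>, the one-variable Cauchy
  inequality on the disc of radius \<open>r/2\<close> applies.\<close>

lemma holo_fun_frechet_derivative_unit_bound:
  assumes hf: "holo_fun D f" and r: "0 < r" "ball w r \<subseteq> D" and u: "norm u = 1"
    and B: "\<And>z. z \<in> ball w r \<Longrightarrow> norm (f z) \<le> B"
  shows "norm (frechet_derivative f (at w) u) \<le> 2 * B / r"
proof -
  define \<phi> where "\<phi> t = f (w + t *s u)" for t
  have inb: "w + t *s u \<in> ball w r" if "t \<in> ball 0 r" for t
    using that u by (simp add: dist_norm norm_vec_smult)
  have d\<phi>: "(\<phi> has_field_derivative frechet_derivative f (at (w + t *s u)) u) (at t)"
    if "t \<in> ball 0 r" for t
    unfolding \<phi>_def[abs_def] by (rule holo_fun_has_field_derivative_on_line[OF hf]) (use inb[OF that] r in blast)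
  have hol: "\<phi> holomorphic_on ball 0 r"
    using d\<phi> by (auto simp: holomorphic_on_open field_differentiable_def) blast
  have "norm ((deriv ^^ 1) \<phi> 0) \<le> fact 1 * B / (r/2)^1"
  proof (rule Cauchy_inequality)
    show "\<phi> holomorphic_on ball 0 (r/2)" by (rule holomorphic_on_subset[OF hol]) (use r in auto)
    show "continuous_on (cball 0 (r/2)) \<phi>"
      by (rule holomorphic_on_imp_continuous_on, rule holomorphic_on_subset[OF hol]) (use r in auto)
    show "norm (0 - x) = r / 2 \<Longrightarrow> norm (\<phi> x) \<le> B" for x
      unfolding \<phi>_def by (rule B, rule inb) (use r in simp)
  qed (use r in simp)
  moreover have "deriv \<phi> 0 = frechet_derivative f (at w) u"
    using DERIV_imp_deriv[OF d\<phi>[of 0]] r by simp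
  ultimately show ?thesis by (simp add: mult.commute)
qed

lemma holo_fun_frechet_derivative_bound:
  assumes hf: "holo_fun D f" and r: "0 < r" "ball w r \<subseteq> D"
    and B: "\<And>z. z \<in> ball w r \<Longrightarrow> norm (f z) \<le> B"
  shows "norm (frechet_derivative f (at w) h) \<le> 2 * B / r * norm h"
proof -
  have wD: "w \<in> D" using r by auto
  consider "h = 0" | "h \<noteq> 0" by blast
  then show ?thesis
  proof cases
    case 1
    then show ?thesis using holo_funD(2)[OF hf wD, of 0 0] by simp
  next
    case 2
    define u where "u = (1 / complex_of_real (norm h)) *s h"
    have "norm u = 1" using 2 by (simp add: u_def norm_vec_smult norm_divide)
    moreover have "h = complex_of_real (norm h) *s u" using 2 by (simp add: u_def vec_eq_iff)
    ultimately have "norm (frechet_derivative f (at w) h) = norm h * norm (frechet_derivative f (at w) u)"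
      using holo_funD(2)[OF hf wD, of "complex_of_real (norm h)" u] by (simp add: norm_mult)
    also have "\<dots> \<le> norm h * (2 * B / r)"
      by (intro mult_left_mono holo_fun_frechet_derivative_unit_bound[OF hf r \<open>norm u = 1\<close>] B norm_ge_zero)
    finally show ?thesis by (simp add: mult.commute)
  qed
qed

lemma holo_fun_lipschitz_on_ball:
  assumes hf: "holo_fun D f" and r: "0 < r" "ball z (2*r) \<subseteq> D"
    and bd: "\<And>x. x \<in> D \<Longrightarrow> norm (f x) \<le> 1" and xy: "x \<in> ball z r" "y \<in> ball z r"
  shows "norm (f x - f y) \<le> 2 / r * norm (x - y)"
proof (rule differentiable_bound[OF convex_ball _ _ xy])
  fix v assume v: "v \<in> ball z r"
  have "ball v r \<subseteq> ball z (2*r)"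
  proof
    fix x assume x: "x \<in> ball v r"
    have "dist z v < r" "dist v x < r" using v x by auto
    then show "x \<in> ball z (2*r)" using dist_triangle[of z x v] by simp
  qed
  then have bv: "ball v r \<subseteq> D" using r by blast
  have vD: "v \<in> D" using bv r(1) by auto
  show "(f has_derivative frechet_derivative f (at v)) (at v within ball z r)"
    by (rule has_derivative_at_withinI[OF holo_funD(1)[OF hf vD]])
  show "onorm (frechet_derivative f (at v)) \<le> 2 / r"
    using holo_fun_frechet_derivative_bound[OF hf r(1) bv, of 1] bv bd
    by (intro onorm_le) (simp add: subset_eq)
qed

lemma holo_fun_constant_near_modulus_max:
  assumes hg: "holo_fun D g" and le: "\<And>z. z \<in> D \<Longrightarrow> norm (g z) \<le> 1"
    and \<rho>: "ball z \<rho> \<subseteq> D" and gz: "norm (g z) = 1" and w: "w \<in> ball z \<rho>"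
  shows "g w = g z"
proof (cases "w = z")
  case False
  define d where "d = w - z"
  have nd: "0 < norm d" "norm d < \<rho>" using False w by (auto simp: d_def dist_norm norm_minus_commute)
  define R where "R = \<rho> / norm d"
  have R1: "1 < R" using nd by (simp add: R_def)
  define \<phi> where "\<phi> = (\<lambda>t::complex. g (z + t *s d))"
  have inD: "z + t *s d \<in> D" if "t \<in> ball (0::complex) R" for t
  proof -
    have "cmod t * norm d < R * norm d" using that nd by (intro mult_strict_right_mono) auto
    then show ?thesis using nd \<rho> by (auto simp: dist_norm norm_vec_smult R_def)
  qed
  have hol: "\<phi> holomorphic_on ball 0 R"
    unfolding holomorphic_on_open[OF open_ball] \<phi>_def
    using holo_fun_has_field_derivative_on_line[OF hg inD] by blast
  have "\<phi> constant_on ball 0 R"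
  proof (rule maximum_modulus_principle[OF hol open_ball connected_ball open_ball order_refl])
    show "0 \<in> ball 0 R" using R1 by simp
    show "norm (\<phi> t) \<le> norm (\<phi> 0)" if "t \<in> ball 0 R" for t
      using le[OF inD[OF that]] gz by (simp add: \<phi>_def)
  qed
  then obtain k where "\<And>t. t \<in> ball 0 R \<Longrightarrow> \<phi> t = k" unfolding constant_on_def by blast
  then have "\<phi> 1 = \<phi> 0" using R1 by simp
  then show ?thesis by (simp add: \<phi>_def d_def)
qed simp

lemma holo_fun_norm_less_1:
  assumes D: "open D" "connected D" and hg: "holo_fun D g"
    and le: "\<And>z. z \<in> D \<Longrightarrow> norm (g z) \<le> 1"
    and x0: "x0 \<in> D" "norm (g x0) < 1" and z1: "z1 \<in> D"
  shows "norm (g z1) < 1"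
proof (rule ccontr)
  assume "\<not> norm (g z1) < 1"
  then have n1: "norm (g z1) = 1" using le[OF z1] by simp
  define A where "A = {z \<in> D. g z = g z1}"
  have "open A"
    unfolding open_contains_ball
  proof
    fix z assume zA: "z \<in> A"
    then obtain \<rho> where "\<rho> > 0" "ball z \<rho> \<subseteq> D"
      using open_contains_ball[THEN iffD1, OF D(1)] by (auto simp: A_def)
    moreover have "ball z \<rho> \<subseteq> A" if "ball z \<rho> \<subseteq> D"
    proof
      fix w assume w: "w \<in> ball z \<rho>"
      have "norm (g z) = 1" using zA n1 by (simp add: A_def)
      from holo_fun_constant_near_modulus_max[OF hg le that this w]
      show "w \<in> A" using zA that w by (auto simp: A_def)
    qed
    ultimately show "\<exists>e>0. ball z e \<subseteq> A" by blast
  qed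
  then have "openin (top_of_set D) A" by (rule open_subset[rotated]) (auto simp: A_def)
  moreover have "closedin (top_of_set D) A"
    unfolding A_def by (rule continuous_closedin_preimage_constant[OF holo_fun_imp_continuous_on[OF hg]])
  moreover have "A \<noteq> {}" using z1 by (auto simp: A_def)
  ultimately have "A = D" using D(2) unfolding connected_clopen by blast
  then have "g x0 = g z1" using x0(1) unfolding A_def by blast
  then show False using x0(2) n1 by simp
qed

subsection \<open>Montel's theorem\<close>

lemma finite_net_in_dense_subset:
  fixes R :: "'a::heine_borel set"
  assumes "cball z r \<subseteq> closure R" "0 < \<delta>" "\<delta> \<le> r"
  obtains F where "F \<subseteq> R \<inter> ball z (2*r)" "finite F" "cball z r \<subseteq> (\<Union>q\<in>F. ball q \<delta>)"
proof -
  have "cball z r \<subseteq> (\<Union>q\<in>R \<inter> ball z (2*r). ball q \<delta>)"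
  proof
    fix w assume w: "w \<in> cball z r"
    then obtain q where q: "q \<in> R" "dist q w < \<delta>"
      using assms closure_approachable by blast
    then have "dist z q < 2*r" using w assms(3) dist_triangle[of z q w] by (simp add: dist_commute)
    then show "w \<in> (\<Union>q\<in>R \<inter> ball z (2*r). ball q \<delta>)" using q by auto
  qed
  then show thesis
    by (rule compactE_image[OF compact_cball, rotated]) (auto intro: that)
qed

lemma uniformly_Cauchy_on_finite:
  fixes f :: "nat \<Rightarrow> 'a \<Rightarrow> 'b::metric_space"
  assumes "finite F" and Cauchy: "\<And>q. q \<in> F \<Longrightarrow> Cauchy (\<lambda>n. f n q)"
  shows "uniformly_Cauchy_on F f"
proof (rule uniformly_Cauchy_onI)
  fix e :: real assume "0 < e"
  then have "\<exists>N. \<forall>m\<ge>N. \<forall>n\<ge>N. dist (f m q) (f n q) < e" if "q \<in> F" for q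
    using Cauchy[OF that] unfolding Cauchy_def by blast
  then obtain N where N: "\<And>q m n. q \<in> F \<Longrightarrow> m \<ge> N q \<Longrightarrow> n \<ge> N q \<Longrightarrow> dist (f m q) (f n q) < e"
    by metis
  have "N q \<le> (\<Sum>q\<in>F. N q)" if "q \<in> F" for q using assms(1) that by (simp add: member_le_sum)
  then show "\<exists>M. \<forall>x\<in>F. \<forall>m\<ge>M. \<forall>n\<ge>M. dist (f m x) (f n x) < e"
    using N by (intro exI[of _ "\<Sum>q\<in>F. N q"]) (meson order_trans)
qed

text \<open>Uniformly bounded holomorphic functions are equi-Lipschitz on small balls, so convergence on
  a dense set propagates to uniform convergence on compact balls.\<close>

lemma holo_fun_bounded_uniformly_Cauchy_on_cball:
  fixes H :: "nat \<Rightarrow> complex^'n \<Rightarrow> complex"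
  assumes hol: "\<And>n. holo_fun D (H n)" and bd: "\<And>n z. z \<in> D \<Longrightarrow> norm (H n z) \<le> 1"
    and R: "R \<subseteq> D" "D \<subseteq> closure R" and conv: "\<And>q. q \<in> R \<Longrightarrow> convergent (\<lambda>n. H n q)"
    and r: "0 < r" "ball z0 (4*r) \<subseteq> D"
  shows "uniformly_Cauchy_on (cball z0 r) H"
proof (rule uniformly_Cauchy_onI)
  fix e :: real assume e: "0 < e"
  define \<delta> where "\<delta> = min r (e*r/6)"
  have \<delta>: "0 < \<delta>" "\<delta> \<le> r" "\<delta> \<le> e*r/6" using r e by (auto simp: \<delta>_def)
  have b2: "ball z0 (2*(2*r)) \<subseteq> D" using r by (simp add: mult.assoc[symmetric])
  have lip: "norm (H m x - H m y) \<le> 1/r * norm (x - y)"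
    if "x \<in> ball z0 (2*r)" "y \<in> ball z0 (2*r)" for m x y
    using holo_fun_lipschitz_on_ball[OF hol[of m] _ b2 bd that] r by simp
  have "cball z0 r \<subseteq> D" using r by (intro order.trans[OF _ r(2)]) (auto simp: subset_eq)
  then have "cball z0 r \<subseteq> closure R" using R(2) by (rule order.trans)
  then obtain F where F: "F \<subseteq> R \<inter> ball z0 (2*r)" "finite F" "cball z0 r \<subseteq> (\<Union>q\<in>F. ball q \<delta>)"
    by (rule finite_net_in_dense_subset[OF _ \<delta>(1,2)]) blast
  have "uniformly_Cauchy_on F H"
  proof (rule uniformly_Cauchy_on_finite[OF F(2)])
    show "Cauchy (\<lambda>n. H n q)" if "q \<in> F" for q
      using F(1) that by (intro convergent_Cauchy conv) blast
  qed
  moreover have "0 < e/3" using e by simp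
  ultimately obtain N where N: "\<And>q m n. q \<in> F \<Longrightarrow> m \<ge> N \<Longrightarrow> n \<ge> N \<Longrightarrow> norm (H m q - H n q) < e/3"
    unfolding uniformly_Cauchy_on_def dist_norm by blast
  show "\<exists>M. \<forall>w\<in>cball z0 r. \<forall>m\<ge>M. \<forall>n\<ge>M. dist (H m w) (H n w) < e"
  proof (intro exI ballI allI impI)
    fix w m n assume w: "w \<in> cball z0 r" and mn: "N \<le> m" "N \<le> n"
    obtain q where q: "q \<in> F" "w \<in> ball q \<delta>" using F(3) w by blast
    have wq: "w \<in> ball z0 (2*r)" "q \<in> ball z0 (2*r)" using w r q F(1) by auto
    have "1/r * norm (w - q) \<le> 1/r * (e*r/6)"
      using q(2) \<delta>(3) r by (intro mult_left_mono) (auto simp: dist_norm norm_minus_commute)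
    also have "\<dots> = e/6" using r by simp
    finally have close: "1/r * norm (w - q) \<le> e/6" .
    have "norm (H m w - H m q) \<le> 1/r * norm (w - q)" by (rule lip[OF wq])
    moreover have "norm (H n q - H n w) \<le> 1/r * norm (w - q)"
      using lip[OF wq(2,1)] by (simp add: norm_minus_commute)
    moreover have "norm (H m w - H n w) \<le>
        norm (H m w - H m q) + norm (H m q - H n q) + norm (H n q - H n w)"
      using norm_triangle_ineq[of "H m w - H m q" "H m q - H n q"]
        norm_triangle_ineq[of "H m w - H m q + (H m q - H n q)" "H n q - H n w"] by simp
    ultimately show "dist (H m w) (H n w) < e"
      using N[OF q(1) mn] close e unfolding dist_norm by linarith
  qed
qed

lemma holo_fun_frechet_derivative_uniformly_Cauchy:
  fixes H :: "nat \<Rightarrow> complex^'n \<Rightarrow> complex"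
  assumes hol: "\<And>n. holo_fun D (H n)" and r: "0 < r" "cball z0 r \<subseteq> D"
    and UC: "uniformly_Cauchy_on (cball z0 r) H" and \<eta>: "0 < \<eta>"
  shows "\<exists>N. \<forall>m\<ge>N. \<forall>n\<ge>N. \<forall>w\<in>ball z0 (r/2). \<forall>h.
           norm (frechet_derivative (H m) (at w) h - frechet_derivative (H n) (at w) h) \<le> \<eta> * norm h"
proof -
  have "0 < \<eta>*r/4" using \<eta> r by simp
  with UC obtain N where N: "\<And>w m n. w \<in> cball z0 r \<Longrightarrow> m \<ge> N \<Longrightarrow> n \<ge> N \<Longrightarrow> norm (H m w - H n w) < \<eta>*r/4"
    unfolding uniformly_Cauchy_on_def dist_norm by blast
  show ?thesis
  proof (intro exI allI impI ballI)
    fix m n w h assume mn: "N \<le> m" "N \<le> n" and w: "w \<in> ball z0 (r/2)"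
    have bw: "ball w (r/2) \<subseteq> cball z0 r"
    proof
      fix y assume "y \<in> ball w (r/2)"
      then have "dist w y < r/2" "dist z0 w < r/2" using w by auto
      then show "y \<in> cball z0 r" using dist_triangle[of z0 y w] by simp
    qed
    have "w \<in> ball w (r/2)" using r by simp
    then have wD: "w \<in> D" using bw r by blast
    have "norm (frechet_derivative (\<lambda>z. H m z - H n z) (at w) h) \<le> 2 * (\<eta>*r/4) / (r/2) * norm h"
    proof (rule holo_fun_frechet_derivative_bound[OF holo_fun_diff(1)[OF hol hol]])
      show "norm (H m y - H n y) \<le> \<eta>*r/4" if "y \<in> ball w (r/2)" for y
        using N[OF _ mn] bw that by (meson less_imp_le subsetD)
      show "0 < r/2" using r by simp
      show "ball w (r/2) \<subseteq> D" using bw r(2) by blast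
    qed
    then show "norm (frechet_derivative (H m) (at w) h - frechet_derivative (H n) (at w) h) \<le> \<eta> * norm h"
      using r by (simp add: holo_fun_diff(2)[OF hol hol wD])
  qed
qed

lemma holo_fun_frechet_derivative_uniform_limit:
  fixes H :: "nat \<Rightarrow> complex^'n \<Rightarrow> complex"
  assumes hol: "\<And>n. holo_fun D (H n)" and r: "0 < r" "cball z0 r \<subseteq> D"
    and UC: "uniformly_Cauchy_on (cball z0 r) H"
  obtains L where "\<And>w h. w \<in> ball z0 (r/2) \<Longrightarrow> (\<lambda>n. frechet_derivative (H n) (at w) h) \<longlonglongrightarrow> L w h"
    "\<And>\<eta>. \<eta> > 0 \<Longrightarrow> \<forall>\<^sub>F n in sequentially. \<forall>w\<in>ball z0 (r/2). \<forall>h.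
                        norm (frechet_derivative (H n) (at w) h - L w h) \<le> \<eta> * norm h"
proof -
  note LC = holo_fun_frechet_derivative_uniformly_Cauchy[OF hol r UC]
  define L where "L w h = lim (\<lambda>n. frechet_derivative (H n) (at w) h)" for w h
  have limL: "(\<lambda>n. frechet_derivative (H n) (at w) h) \<longlonglongrightarrow> L w h" if w: "w \<in> ball z0 (r/2)" for w h
  proof -
    have "Cauchy (\<lambda>n. frechet_derivative (H n) (at w) h)"
    proof (rule CauchyI)
      fix e :: real assume e: "0 < e"
      have np: "0 < norm h + 1" by (simp add: add_nonneg_pos)
      have \<eta>: "0 < e / (norm h + 1)" and small: "e / (norm h + 1) * norm h < e"
        using e np by (simp_all add: field_simps)
      obtain N where "\<forall>m\<ge>N. \<forall>n\<ge>N. norm (frechet_derivative (H m) (at w) h -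
          frechet_derivative (H n) (at w) h) \<le> e / (norm h + 1) * norm h"
        using LC[OF \<eta>] w by blast
      with small show "\<exists>M. \<forall>m\<ge>M. \<forall>n\<ge>M.
          norm (frechet_derivative (H m) (at w) h - frechet_derivative (H n) (at w) h) < e"
        by (meson le_less_trans)
    qed
    then show ?thesis by (simp add: L_def Cauchy_convergent_iff convergent_LIMSEQ_iff)
  qed
  have "\<forall>\<^sub>F n in sequentially. \<forall>w\<in>ball z0 (r/2). \<forall>h.
          norm (frechet_derivative (H n) (at w) h - L w h) \<le> \<eta> * norm h" if \<eta>: "\<eta> > 0" for \<eta>
  proof -
    obtain N where N: "\<forall>m\<ge>N. \<forall>n\<ge>N. \<forall>w\<in>ball z0 (r/2). \<forall>h.
        norm (frechet_derivative (H m) (at w) h - frechet_derivative (H n) (at w) h) \<le> \<eta> * norm h"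
      using LC[OF \<eta>] by blast
    have "norm (frechet_derivative (H n) (at w) h - L w h) \<le> \<eta> * norm h"
      if "N \<le> n" "w \<in> ball z0 (r/2)" for n w h
      by (rule Lim_bounded[OF tendsto_norm[OF tendsto_diff[OF tendsto_const limL[OF that(2)]]], of N])
         (use N that in blast)
    then show ?thesis unfolding eventually_sequentially by blast
  qed
  with limL show thesis by (rule that)
qed

lemma holo_fun_uniform_limit_has_derivative:
  fixes H :: "nat \<Rightarrow> complex^'n \<Rightarrow> complex"
  assumes hol: "\<And>n. holo_fun D (H n)" and r: "0 < r" "cball z0 r \<subseteq> D"
    and UC: "uniformly_Cauchy_on (cball z0 r) H"
    and lim: "\<And>z. z \<in> ball z0 (r/2) \<Longrightarrow> (\<lambda>n. H n z) \<longlonglongrightarrow> g z"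
  shows "\<exists>L. (g has_derivative L) (at z0) \<and> (\<forall>c x. L (c *s x) = c * L x) \<and>
               (\<forall>h. (\<lambda>n. frechet_derivative (H n) (at z0) h) \<longlonglongrightarrow> L h)"
proof -
  define S where "S = ball z0 (r/2)"
  have SD: "S \<subseteq> D" and z0S: "z0 \<in> S" and "open S" using r by (auto simp: S_def)
  obtain L where limL: "\<And>w h. w \<in> S \<Longrightarrow> (\<lambda>n. frechet_derivative (H n) (at w) h) \<longlonglongrightarrow> L w h"
    and nle: "\<And>\<eta>. \<eta> > 0 \<Longrightarrow> \<forall>\<^sub>F n in sequentially. \<forall>w\<in>S. \<forall>h.
                 norm (frechet_derivative (H n) (at w) h - L w h) \<le> \<eta> * norm h"
    unfolding S_def by (rule holo_fun_frechet_derivative_uniform_limit[OF hol r UC]) blast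
  have derH: "(H n has_derivative frechet_derivative (H n) (at x)) (at x within S)" if "x \<in> S" for n x
    using SD that by (intro has_derivative_at_withinI[OF holo_funD(1)[OF hol]]) auto
  have limS: "(\<lambda>n. H n x) \<longlonglongrightarrow> g x" if "x \<in> S" for x
    using lim that unfolding S_def by blast
  obtain gt where gt: "\<forall>x\<in>S. (\<lambda>n. H n x) \<longlonglongrightarrow> gt x \<and> (gt has_derivative L x) (at x within S)"
    using has_derivative_sequence[OF convex_ball[of z0 "r/2", folded S_def] derH nle z0S limS[OF z0S]]
    by blast
  have eq: "gt x = g x" if "x \<in> S" for x
  proof -
    have "(\<lambda>n. H n x) \<longlonglongrightarrow> gt x" using gt that by blast
    then show ?thesis using limS[OF that] by (rule LIMSEQ_unique)
  qed
  have "(gt has_derivative L z0) (at z0 within S)" using gt z0S by blast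
  then have "(gt has_derivative L z0) (at z0)" using at_within_open[OF z0S \<open>open S\<close>] by simp
  then have "(g has_derivative L z0) (at z0)"
    by (rule has_derivative_transform_within_open[OF _ \<open>open S\<close> z0S eq])
  moreover have "L z0 (c *s x) = c * L z0 x" for c x
  proof -
    have "(\<lambda>n. frechet_derivative (H n) (at z0) (c *s x)) \<longlonglongrightarrow> c * L z0 x"
      using tendsto_mult_left[OF limL[OF z0S, of x], of c] SD z0S
      by (simp add: holo_funD(2)[OF hol] subsetD)
    then show ?thesis using limL[OF z0S, of "c *s x"] LIMSEQ_unique by blast
  qed
  ultimately show ?thesis using limL[OF z0S] by (intro exI[of _ "L z0"]) blast
qed

lemma holo_fun_locally_uniform_limit:
  fixes H :: "nat \<Rightarrow> complex^'n \<Rightarrow> complex"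
  assumes hol: "\<And>n. holo_fun D (H n)"
    and loc: "\<And>z. z \<in> D \<Longrightarrow> \<exists>r>0. cball z r \<subseteq> D \<and> uniformly_Cauchy_on (cball z r) H"
  obtains g where "holo_fun D g" "\<And>z. z \<in> D \<Longrightarrow> (\<lambda>n. H n z) \<longlonglongrightarrow> g z"
    "\<And>z h. z \<in> D \<Longrightarrow> (\<lambda>n. frechet_derivative (H n) (at z) h) \<longlonglongrightarrow> frechet_derivative g (at z) h"
proof -
  define g where "g z = lim (\<lambda>n. H n z)" for z
  have gl: "(\<lambda>n. H n z) \<longlonglongrightarrow> g z" if "z \<in> D" for z
    using loc[OF that] uniformly_Cauchy_imp_Cauchy[of _ H z]
    by (auto simp: g_def Cauchy_convergent_iff convergent_LIMSEQ_iff)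
  have der: "\<exists>L. (g has_derivative L) (at z) \<and> (\<forall>c x. L (c *s x) = c * L x) \<and>
               (\<forall>h. (\<lambda>n. frechet_derivative (H n) (at z) h) \<longlonglongrightarrow> L h)" if z: "z \<in> D" for z
  proof -
    obtain r where r: "0 < r" "cball z r \<subseteq> D" "uniformly_Cauchy_on (cball z r) H"
      using loc[OF z] by blast
    have lim: "\<And>w. w \<in> ball z (r/2) \<Longrightarrow> (\<lambda>n. H n w) \<longlonglongrightarrow> g w" using r by (intro gl) auto
    show ?thesis by (rule holo_fun_uniform_limit_has_derivative[OF hol r lim])
  qed
  show thesis
  proof (rule that)
    show "holo_fun D g" unfolding holo_fun_def using der by blast
    show "(\<lambda>n. frechet_derivative (H n) (at z) h) \<longlonglongrightarrow> frechet_derivative g (at z) h" if "z \<in> D" for z h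
      using der[OF that] frechet_derivative_at by blast
  qed (rule gl)
qed

theorem montel_holo_fun:
  fixes G :: "nat \<Rightarrow> complex^'n \<Rightarrow> complex"
  assumes D: "open D" and hol: "\<And>k. holo_fun D (G k)" and bd: "\<And>k z. z \<in> D \<Longrightarrow> norm (G k z) \<le> 1"
  obtains s g where "strict_mono s" "holo_fun D g" "\<And>z. z \<in> D \<Longrightarrow> (\<lambda>n. G (s n) z) \<longlonglongrightarrow> g z"
    "\<And>z h. z \<in> D \<Longrightarrow> (\<lambda>n. frechet_derivative (G (s n)) (at z) h) \<longlonglongrightarrow> frechet_derivative g (at z) h"
proof -
  obtain R where R: "countable R" "R \<subseteq> D" "D \<subseteq> closure R" by (rule separable)
  obtain s where s: "strict_mono s" "\<And>x. x \<in> R \<Longrightarrow> \<exists>l. (\<lambda>n. G (s n) x) \<longlonglongrightarrow> l"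
    using function_convergent_subsequence[of R G 1, OF R(1)] bd R(2) by blast
  have "\<exists>r>0. cball z r \<subseteq> D \<and> uniformly_Cauchy_on (cball z r) (\<lambda>n. G (s n))" if z: "z \<in> D" for z
  proof -
    obtain e where e: "e > 0" "ball z e \<subseteq> D" using D z open_contains_ball by blast
    have "ball z (4 * (e/4)) \<subseteq> D" using e by simp
    with e(1) have "uniformly_Cauchy_on (cball z (e/4)) (\<lambda>n. G (s n))"
      by (intro holo_fun_bounded_uniformly_Cauchy_on_cball[OF hol bd R(2,3)])
         (use s(2) in \<open>auto simp: convergent_def\<close>)
    moreover have "cball z (e/4) \<subseteq> D" using e by (intro order.trans[OF _ e(2)]) (auto simp: subset_eq)
    ultimately show ?thesis using e(1) by (intro exI[of _ "e/4"]) auto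
  qed
  then obtain g where "holo_fun D g" "\<And>z. z \<in> D \<Longrightarrow> (\<lambda>n. G (s n) z) \<longlonglongrightarrow> g z"
    "\<And>z h. z \<in> D \<Longrightarrow> (\<lambda>n. frechet_derivative (G (s n)) (at z) h) \<longlonglongrightarrow> frechet_derivative g (at z) h"
    using holo_fun_locally_uniform_limit[where H="\<lambda>n. G (s n)"] hol by blast
  with s(1) show thesis by (rule that)
qed

section \<open>The Schwarz--Pick lemma\<close>

abbreviation moebius :: "complex \<Rightarrow> complex \<Rightarrow> complex" where
  "moebius w \<equiv> Moebius_function 0 w"

lemma moebius_eq: "moebius w z = (z - w) / (1 - cnj w * z)"
  by (simp add: Moebius_function_simple)

lemma moebius_inverse: "norm w < 1 \<Longrightarrow> norm z < 1 \<Longrightarrow> moebius (-w) (moebius w z) = z"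
  by (rule Moebius_function_compose) auto

lemma moebius_denominator_nonzero: "norm w < 1 \<Longrightarrow> norm z < 1 \<Longrightarrow> 1 - cnj w * z \<noteq> 0"
proof
  assume "norm w < 1" "norm z < 1" "1 - cnj w * z = 0"
  then have "norm (cnj w * z) = 1" by (metis eq_iff_diff_eq_0 norm_one)
  moreover have "norm (cnj w * z) < 1" using \<open>norm w < 1\<close> \<open>norm z < 1\<close>
    by (simp add: norm_mult) (metis mult_strict_mono' norm_ge_zero mult_1 less_le_trans mult_le_one less_imp_le)
  ultimately show False by simp
qed

lemma moebius_eq_0_iff: "norm w < 1 \<Longrightarrow> norm z < 1 \<Longrightarrow> moebius w z = 0 \<longleftrightarrow> z = w"
  using moebius_denominator_nonzero by (auto simp: moebius_eq)

lemma cnj_mult_self: "cnj w * w = complex_of_real ((cmod w)^2)"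
  using complex_norm_square[of w] by (simp add: mult.commute)

lemma moebius_has_field_derivative:
  assumes "norm w < 1" "norm z < 1"
  shows "(moebius w has_field_derivative (1 - cnj w * w) / (1 - cnj w * z)^2) (at z)"
proof -
  have nz: "1 - cnj w * z \<noteq> 0" using moebius_denominator_nonzero assms by blast
  have num: "(1 - 0) * (1 - cnj w * z) - (z - w) * (0 - (0 * z + 1 * cnj w)) = 1 - cnj w * w"
    by (simp add: algebra_simps)
  show ?thesis unfolding Moebius_function_simple
    by (rule derivative_eq_intros refl | simp add: nz)+ (use num nz in \<open>auto simp: power2_eq_square\<close>)
qed

text \<open>The derivative is written with a real factor \<open>r = 1 - |w|\<^sup>2\<close>, so that the simplifier does
  not split \<open>complex_of_real r\<close>.\<close>

lemma deriv_moebius_at_centre: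
  assumes "norm w < 1" "r = 1 - (cmod w)^2"
  shows "deriv (moebius w) w = 1 / complex_of_real r"
proof -
  have "(moebius w has_field_derivative 1 / complex_of_real r) (at w)"
    using moebius_has_field_derivative[OF assms(1,1)] moebius_denominator_nonzero[OF assms(1,1)]
    by (simp add: assms(2) cnj_mult_self power2_eq_square)
  then show ?thesis by (rule DERIV_imp_deriv)
qed

lemma poincare_dist_eq_moebius: "poincare_dist z w = artanh (cmod (moebius w z))"
  by (simp add: poincare_dist_def moebius_eq)

lemma norm_moebius_commute: "cmod (moebius w z) = cmod (moebius z w)"
proof -
  have "cmod (1 - cnj w * z) = cmod (cnj (1 - cnj w * z))" by (rule complex_mod_cnj[symmetric])
  also have "\<dots> = cmod (1 - cnj z * w)" by (simp add: mult.commute)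
  finally show ?thesis by (simp add: moebius_eq norm_divide norm_minus_commute)
qed

lemma poincare_dist_0: "poincare_dist 0 w = artanh (cmod w)"
  by (simp add: poincare_dist_def)

lemma poincare_metric_moebius_centre:
  assumes "norm p < 1"
  shows "poincare_metric (moebius p p) (deriv (moebius p) p * v) = poincare_metric p v"
proof -
  define r where "r = 1 - (cmod p)^2"
  have "0 < r" using assms by (simp add: r_def power_less_one_iff abs_less_iff)
  then show ?thesis
    using deriv_moebius_at_centre[OF assms r_def]
    by (simp add: poincare_metric_def Moebius_function_eq_zero norm_mult norm_divide r_def[symmetric])
qed

lemma artanh_less:
  fixes x y :: real
  assumes "-1 < x" "x < y" "y < 1"
  shows "artanh x < artanh y"
proof -
  have "(1 + x) / (1 - x) < (1 + y) / (1 - y)" "0 < (1 + x) / (1 - x)"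
    using assms by (simp_all add: field_simps)
  then show ?thesis by (simp add: artanh_def)
qed

lemma artanh_le_iff:
  fixes x y :: real
  assumes "-1 < x" "x < 1" "-1 < y" "y < 1"
  shows "artanh x \<le> artanh y \<longleftrightarrow> x \<le> y"
  using artanh_less assms by (metis linorder_not_le order_less_imp_le order.strict_iff_order)

lemma artanh_norm_le_iff:
  "norm x < 1 \<Longrightarrow> norm y < 1 \<Longrightarrow> artanh (norm x) \<le> artanh (norm y) \<longleftrightarrow> norm x \<le> norm y"
  using norm_ge_zero[of x] norm_ge_zero[of y] by (intro artanh_le_iff) linarith+

locale disc_self_map =
  fixes f :: "complex \<Rightarrow> complex"
  assumes holomorphic: "f holomorphic_on ball 0 1" and maps_into: "f ` ball 0 1 \<subseteq> ball 0 1"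
begin

lemma norm_less_1: "norm z < 1 \<Longrightarrow> norm (f z) < 1"
  using maps_into by (meson image_subset_iff mem_ball_0)

text \<open>Schwarz's lemma for \<open>recentred a\<close> is the Schwarz--Pick lemma for \<open>f\<close> at \<open>a\<close>.\<close>

definition recentred :: "complex \<Rightarrow> complex \<Rightarrow> complex" where
  "recentred a z = moebius (f a) (f (moebius (-a) z))"

lemma recentred_holomorphic:
  assumes a: "norm a < 1"
  shows "recentred a holomorphic_on ball 0 1"
proof -
  have "(f \<circ> moebius (-a)) holomorphic_on ball 0 1"
    by (rule holomorphic_on_compose_gen[OF Moebius_function_holomorphic holomorphic])
       (use a Moebius_function_norm_lt_1[of "-a"] in auto)
  then have "(moebius (f a) \<circ> (f \<circ> moebius (-a))) holomorphic_on ball 0 1"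
    by (rule holomorphic_on_compose_gen[OF _ Moebius_function_holomorphic])
       (use a norm_less_1 Moebius_function_norm_lt_1[of "-a"] in auto)
  then show ?thesis by (simp add: recentred_def[abs_def] o_def)
qed

lemma recentred_0: "recentred a 0 = 0"
  by (simp add: recentred_def Moebius_function_of_zero Moebius_function_eq_zero)

lemma norm_recentred_less_1: "norm a < 1 \<Longrightarrow> norm z < 1 \<Longrightarrow> norm (recentred a z) < 1"
  unfolding recentred_def
  using norm_less_1 Moebius_function_norm_lt_1[of "-a" z] Moebius_function_norm_lt_1[of "f a"]
  by simp

lemma recentred_moebius:
  "norm a < 1 \<Longrightarrow> norm z < 1 \<Longrightarrow> recentred a (moebius a z) = moebius (f a) (f z)"
  by (simp add: recentred_def moebius_inverse)

lemma norm_deriv_recentred_0: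
  assumes a: "norm a < 1"
  shows "norm (deriv (recentred a) 0) = poincare_metric (f a) (deriv f a) * (1 - (cmod a)^2)"
proof -
  have fa: "norm (f a) < 1" using norm_less_1 a .
  define ra rf where "ra = 1 - (cmod a)^2" and "rf = 1 - (cmod (f a))^2"
  have pos: "0 < ra" "0 < rf" using a fa by (simp_all add: ra_def rf_def power_less_one_iff abs_less_iff)
  have d1: "(moebius (-a) has_field_derivative complex_of_real ra) (at 0)"
    using moebius_has_field_derivative[of "-a" 0] a by (simp add: cnj_mult_self ra_def)
  have d2: "(f has_field_derivative deriv f a) (at (moebius (-a) 0))"
    using holomorphic a by (auto simp: Moebius_function_of_zero intro!: holomorphic_derivI)
  have d3: "(moebius (f a) has_field_derivative 1 / complex_of_real rf) (at (f (moebius (-a) 0)))"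
    using moebius_has_field_derivative[OF fa fa] moebius_denominator_nonzero[OF fa fa]
    by (simp add: Moebius_function_of_zero cnj_mult_self power2_eq_square rf_def)
  have "(recentred a has_field_derivative
      1 / complex_of_real rf * (deriv f a * complex_of_real ra)) (at 0)"
    unfolding recentred_def[abs_def] by (rule DERIV_chain2[OF d3 DERIV_chain2[OF d2 d1]])
  then have "deriv (recentred a) 0 = 1 / complex_of_real rf * (deriv f a * complex_of_real ra)"
    by (rule DERIV_imp_deriv)
  with pos show ?thesis
    by (simp add: poincare_metric_def norm_mult norm_divide rf_def[symmetric] ra_def[symmetric])
qed

lemma schwarz_lemma_recentred:
  assumes a: "norm a < 1"
  shows "norm \<xi> < 1 \<Longrightarrow> norm (recentred a \<xi>) \<le> norm \<xi>"
    and "norm (deriv (recentred a) 0) \<le> 1"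
  by (rule Schwarz_Lemma[where f="recentred a"];
      use a recentred_holomorphic recentred_0 norm_recentred_less_1 in auto)+

theorem schwarz_pick_dist:
  assumes z: "norm z < 1" and a: "norm a < 1"
  shows "poincare_dist (f z) (f a) \<le> poincare_dist z a"
proof -
  have xi: "norm (moebius a z) < 1" using Moebius_function_norm_lt_1 a z by blast
  have "norm (moebius (f a) (f z)) \<le> norm (moebius a z)"
    using schwarz_lemma_recentred(1)[OF a xi] by (simp add: recentred_moebius[OF a z])
  moreover have "norm (moebius (f a) (f z)) < 1"
    using Moebius_function_norm_lt_1 norm_less_1 a z by blast
  ultimately show ?thesis by (simp add: poincare_dist_eq_moebius artanh_norm_le_iff xi)
qed

theorem schwarz_pick_metric:
  assumes a: "norm a < 1"
  shows "poincare_metric (f a) (c * deriv f a) \<le> cmod c / (1 - (cmod a)^2)"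
proof -
  note schwarz_lemma_recentred(2)[OF a]
  moreover have "0 < 1 - (cmod a)^2" using a by (simp add: power_less_one_iff abs_less_iff)
  ultimately have "poincare_metric (f a) (deriv f a) \<le> 1 / (1 - (cmod a)^2)"
    by (simp add: norm_deriv_recentred_0[OF a] field_simps)
  from mult_left_mono[OF this norm_ge_zero[of c]] show ?thesis
    by (simp add: poincare_metric_def norm_mult)
qed

text \<open>Equality in the Schwarz lemma makes \<open>recentred a\<close> a rotation, so \<open>f\<close> is a disc automorphism.\<close>

lemma left_invertible_if_schwarz_equality:
  assumes a: "norm a < 1"
    and eq: "(\<exists>z. norm z < 1 \<and> z \<noteq> 0 \<and> norm (recentred a z) = norm z) \<or> norm (deriv (recentred a) 0) = 1"
  shows "\<exists>h. h holomorphic_on ball 0 1 \<and> h ` ball 0 1 \<subseteq> ball 0 1 \<and> (\<forall>\<zeta>\<in>ball 0 1. h (f \<zeta>) = \<zeta>)"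
proof -
  have "\<exists>\<alpha>. (\<forall>z. norm z < 1 \<longrightarrow> recentred a z = \<alpha> * z) \<and> norm \<alpha> = 1"
    by (rule Schwarz_Lemma(3)[where f="recentred a" and \<xi>=0])
       (simp_all add: a eq recentred_holomorphic recentred_0 norm_recentred_less_1)
  then obtain \<alpha> where \<alpha>: "\<And>z. norm z < 1 \<Longrightarrow> recentred a z = \<alpha> * z" "norm \<alpha> = 1" by blast
  have fa: "norm (f a) < 1" using norm_less_1 a .
  define h where "h w = moebius (-a) (cnj \<alpha> * moebius (f a) w)" for w
  have in1: "norm (cnj \<alpha> * moebius (f a) w) < 1" if "norm w < 1" for w
    using Moebius_function_norm_lt_1[OF fa that] \<alpha>(2) by (simp add: norm_mult)
  have "(\<lambda>w. cnj \<alpha> * moebius (f a) w) holomorphic_on ball 0 1"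
    by (rule holomorphic_on_mult[OF holomorphic_on_const Moebius_function_holomorphic[OF fa]])
  then have "(moebius (-a) \<circ> (\<lambda>w. cnj \<alpha> * moebius (f a) w)) holomorphic_on ball 0 1"
    by (rule holomorphic_on_compose_gen[OF _ Moebius_function_holomorphic]) (use in1 a in auto)
  moreover have "h ` ball 0 1 \<subseteq> ball 0 1"
    unfolding h_def using in1 a Moebius_function_norm_lt_1[of "-a"] by auto
  moreover have "h (f \<zeta>) = \<zeta>" if "\<zeta> \<in> ball 0 1" for \<zeta>
  proof -
    have z: "norm \<zeta> < 1" using that by simp
    have "moebius (f a) (f \<zeta>) = \<alpha> * moebius a \<zeta>"
      using recentred_moebius[OF a z] \<alpha>(1)[OF Moebius_function_norm_lt_1[OF a z]] by simp
    moreover have "cnj \<alpha> * \<alpha> = 1" using \<alpha>(2) by (simp add: cnj_mult_self)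
    ultimately have "cnj \<alpha> * moebius (f a) (f \<zeta>) = moebius a \<zeta>" by (simp add: mult.assoc[symmetric])
    then show ?thesis unfolding h_def using moebius_inverse[OF a z] by simp
  qed
  ultimately show ?thesis by (auto simp: h_def[abs_def] o_def)
qed

theorem schwarz_pick_dist_rigid:
  assumes z: "norm z < 1" "z \<noteq> a" and a: "norm a < 1"
    and eq: "poincare_dist z a \<le> poincare_dist (f z) (f a)"
  shows "\<exists>h. h holomorphic_on ball 0 1 \<and> h ` ball 0 1 \<subseteq> ball 0 1 \<and> (\<forall>\<zeta>\<in>ball 0 1. h (f \<zeta>) = \<zeta>)"
proof (rule left_invertible_if_schwarz_equality[OF a], rule disjI1)
  have xi: "norm (moebius a z) < 1" using Moebius_function_norm_lt_1 a z by blast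
  have "norm (moebius (f a) (f z)) < 1" using Moebius_function_norm_lt_1 norm_less_1 a z by blast
  then have "norm (moebius a z) \<le> norm (recentred a (moebius a z))"
    using eq by (simp add: poincare_dist_eq_moebius artanh_norm_le_iff xi recentred_moebius[OF a z(1)])
  then have "norm (recentred a (moebius a z)) = norm (moebius a z)"
    using schwarz_lemma_recentred(1)[OF a xi] by linarith
  moreover have "moebius a z \<noteq> 0" using moebius_eq_0_iff a z by blast
  ultimately show "\<exists>\<xi>. norm \<xi> < 1 \<and> \<xi> \<noteq> 0 \<and> norm (recentred a \<xi>) = norm \<xi>"
    using xi by blast
qed

theorem schwarz_pick_metric_rigid:
  assumes a: "norm a < 1" and eq: "1 / (1 - (cmod a)^2) \<le> poincare_metric (f a) (deriv f a)"
  shows "\<exists>h. h holomorphic_on ball 0 1 \<and> h ` ball 0 1 \<subseteq> ball 0 1 \<and> (\<forall>\<zeta>\<in>ball 0 1. h (f \<zeta>) = \<zeta>)"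
proof (rule left_invertible_if_schwarz_equality[OF a], rule disjI2)
  have "0 < 1 - (cmod a)^2" using a by (simp add: power_less_one_iff abs_less_iff)
  then have "1 \<le> norm (deriv (recentred a) 0)"
    using eq by (simp add: norm_deriv_recentred_0[OF a] field_simps)
  then show "norm (deriv (recentred a) 0) = 1" using schwarz_lemma_recentred(2)[OF a] by linarith
qed

end

section \<open>Extremal functions for the Carath\'eodory pseudodistance and pseudometric\<close>

lemma holo_D_to_disc_const: "norm c < 1 \<Longrightarrow> holo_D_to_disc D (\<lambda>z. c)"
  unfolding holo_D_to_disc_def using holo_fun_const by auto

lemma holo_D_to_disc_norm_less_1: "holo_D_to_disc D g \<Longrightarrow> z \<in> D \<Longrightarrow> norm (g z) < 1"
  unfolding holo_D_to_disc_def by auto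

text \<open>Normalising by \<open>moebius (G k x)\<close> keeps the values at \<open>x\<close> equal to \<open>0\<close>, so the maximum
  principle keeps the Montel limit inside the disc.\<close>

lemma holo_D_to_disc_normalised_limit:
  fixes G :: "nat \<Rightarrow> complex^'n \<Rightarrow> complex"
  assumes D: "open D" "connected D" and G: "\<And>k. holo_D_to_disc D (G k)" and x: "x \<in> D"
  obtains s g where "strict_mono s" "holo_D_to_disc D g" "g x = 0"
    "\<And>z. z \<in> D \<Longrightarrow> (\<lambda>n. moebius (G (s n) x) (G (s n) z)) \<longlonglongrightarrow> g z"
    "\<And>z h. z \<in> D \<Longrightarrow> (\<lambda>n. frechet_derivative (moebius (G (s n) x) \<circ> G (s n)) (at z) h)
                          \<longlonglongrightarrow> frechet_derivative g (at z) h"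
proof -
  define H where "H k = moebius (G k x) \<circ> G k" for k
  have into: "\<And>k z. z \<in> D \<Longrightarrow> norm (G k z) < 1" using G holo_D_to_disc_norm_less_1 by blast
  have holH: "holo_fun D (H k)" for k
    unfolding H_def using G into x
    by (intro holo_fun_holomorphic_comp[where S="ball 0 1"] Moebius_function_holomorphic)
       (auto simp: holo_D_to_disc_def)
  have bdH: "norm (H k z) \<le> 1" if "z \<in> D" for k z
    using Moebius_function_norm_lt_1[where t=0, OF into[of x k, OF x] into[of z k, OF that]] by (simp add: H_def)
  obtain s g where s: "strict_mono s" and g: "holo_fun D g"
    and lim: "\<And>z. z \<in> D \<Longrightarrow> (\<lambda>n. H (s n) z) \<longlonglongrightarrow> g z"
    and dlim: "\<And>z h. z \<in> D \<Longrightarrow> (\<lambda>n. frechet_derivative (H (s n)) (at z) h) \<longlonglongrightarrow> frechet_derivative g (at z) h"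
    using montel_holo_fun[where G=H, OF D(1) holH bdH] by blast
  have gx: "g x = 0"
    using lim[OF x] by (simp add: H_def Moebius_function_eq_zero LIMSEQ_const_iff)
  have "norm (g z) \<le> 1" if "z \<in> D" for z
    using bdH that by (intro Lim_bounded[OF tendsto_norm[OF lim]]) auto
  then have hD: "holo_D_to_disc D g"
    using holo_fun_norm_less_1[OF D g _ x] gx g by (auto simp: holo_D_to_disc_def)
  show thesis
  proof (rule that[OF s hD gx])
    show "(\<lambda>n. moebius (G (s n) x) (G (s n) z)) \<longlonglongrightarrow> g z" if "z \<in> D" for z
      using lim[OF that] by (simp add: H_def)
    show "(\<lambda>n. frechet_derivative (moebius (G (s n) x) \<circ> G (s n)) (at z) h)
            \<longlonglongrightarrow> frechet_derivative g (at z) h" if "z \<in> D" for z h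
      using dlim[OF that] by (simp add: H_def)
  qed
qed

lemma Sup_attained_if_subsequence_limits:
  fixes F :: "'a \<Rightarrow> real"
  assumes "P g0" "bdd_above {F g |g. P g}"
    and lim: "\<And>G :: nat \<Rightarrow> 'a. (\<And>k. P (G k)) \<Longrightarrow> \<exists>s g. strict_mono s \<and> P g \<and> (\<lambda>n. F (G (s n))) \<longlonglongrightarrow> F g"
  obtains g where "P g" "F g = Sup {F g |g. P g}"
proof -
  let ?S = "{F g |g. P g}"
  have "Sup ?S \<in> closure ?S" using assms(1,2) by (intro closure_contains_Sup) auto
  then obtain X where X: "\<And>n. X n \<in> ?S" "X \<longlonglongrightarrow> Sup ?S" unfolding closure_sequential by blast
  then have "\<forall>n. \<exists>g. P g \<and> X n = F g" by blast
  then obtain G where G: "\<And>n. P (G n)" "\<And>n. X n = F (G n)" by metis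
  obtain s g where sg: "strict_mono s" "P g" "(\<lambda>n. F (G (s n))) \<longlonglongrightarrow> F g" using lim[of G, OF G(1)] by blast
  have "(\<lambda>n. F (G (s n))) \<longlonglongrightarrow> Sup ?S"
    using LIMSEQ_subseq_LIMSEQ[OF X(2) sg(1)] G(2) by (simp add: o_def)
  then have "F g = Sup ?S" using sg(3) LIMSEQ_unique by blast
  with sg(2) show thesis by (rule that)
qed

lemma cara_dist_D_extremal:
  fixes D :: "(complex^'n) set"
  assumes D: "open D" "connected D" and xy: "x \<in> D" "y \<in> D"
    and bdd: "bdd_above {poincare_dist (g x) (g y) |g. holo_D_to_disc D g}"
  obtains g where "holo_D_to_disc D g" "poincare_dist (g x) (g y) = cara_dist_D D x y"
proof -
  have "\<exists>s g. strict_mono s \<and> holo_D_to_disc D g \<and>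
          (\<lambda>n. poincare_dist (G (s n) x) (G (s n) y)) \<longlonglongrightarrow> poincare_dist (g x) (g y)"
    if G: "\<And>k. holo_D_to_disc D (G k)" for G :: "nat \<Rightarrow> complex^'n \<Rightarrow> complex"
  proof -
    obtain s g where s: "strict_mono s" and g: "holo_D_to_disc D g" "g x = 0"
      and lim: "\<And>z. z \<in> D \<Longrightarrow> (\<lambda>n. moebius (G (s n) x) (G (s n) z)) \<longlonglongrightarrow> g z"
      and "\<And>z h. z \<in> D \<Longrightarrow> (\<lambda>n. frechet_derivative (moebius (G (s n) x) \<circ> G (s n)) (at z) h)
                          \<longlonglongrightarrow> frechet_derivative g (at z) h"
      by (rule holo_D_to_disc_normalised_limit[where G=G, OF D G xy(1)]) blast
    have "poincare_dist (G k x) (G k y) = artanh (norm (moebius (G k x) (G k y)))" for k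
      by (simp add: poincare_dist_eq_moebius norm_moebius_commute[of "G k y"])
    moreover have "(\<lambda>n. artanh (norm (moebius (G (s n) x) (G (s n) y)))) \<longlonglongrightarrow> artanh (norm (g y))"
      using holo_D_to_disc_norm_less_1[OF g(1) xy(2)]
      by (intro tendsto_artanh tendsto_norm lim[OF xy(2)]) (auto intro: less_le_trans[of _ 0])
    ultimately have "(\<lambda>n. poincare_dist (G (s n) x) (G (s n) y)) \<longlonglongrightarrow> poincare_dist (g x) (g y)"
      by (simp add: g(2) poincare_dist_0)
    with s g(1) show ?thesis by blast
  qed
  then obtain g where "holo_D_to_disc D g"
      "poincare_dist (g x) (g y) = Sup {poincare_dist (g x) (g y) |g. holo_D_to_disc D g}"
    by (rule Sup_attained_if_subsequence_limits[where F="\<lambda>g. poincare_dist (g x) (g y)",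
          OF holo_D_to_disc_const[where c=0, simplified] bdd])
  then show thesis using that[unfolded cara_dist_D_def] by blast
qed

lemma poincare_metric_eq_norm_frechet_derivative_moebius:
  assumes g: "holo_D_to_disc D g" and x: "x \<in> D"
  shows "poincare_metric (g x) (frechet_derivative g (at x) v) =
           norm (frechet_derivative (moebius (g x) \<circ> g) (at x) v)"
proof -
  have gx: "norm (g x) < 1" using holo_D_to_disc_norm_less_1[OF g x] .
  have "frechet_derivative (moebius (g x) \<circ> g) (at x) v =
          deriv (moebius (g x)) (g x) * frechet_derivative g (at x) v"
    using g x by (intro frechet_derivative_holomorphic_comp_holo_fun[OF _ _ open_ball
        Moebius_function_holomorphic[OF gx]]) (auto simp: holo_D_to_disc_def)
  then show ?thesis
    using poincare_metric_moebius_centre[OF gx, of "frechet_derivative g (at x) v"]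
    by (simp add: Moebius_function_eq_zero poincare_metric_def)
qed

lemma cara_metric_D_extremal:
  fixes D :: "(complex^'n) set"
  assumes D: "open D" "connected D" and x: "x \<in> D"
    and bdd: "bdd_above {poincare_metric (g x) (frechet_derivative g (at x) v) |g. holo_D_to_disc D g}"
  obtains g where "holo_D_to_disc D g"
    "poincare_metric (g x) (frechet_derivative g (at x) v) = cara_metric_D D x v"
proof -
  have "\<exists>s g. strict_mono s \<and> holo_D_to_disc D g \<and>
          (\<lambda>n. poincare_metric (G (s n) x) (frechet_derivative (G (s n)) (at x) v))
            \<longlonglongrightarrow> poincare_metric (g x) (frechet_derivative g (at x) v)"
    if G: "\<And>k. holo_D_to_disc D (G k)" for G :: "nat \<Rightarrow> complex^'n \<Rightarrow> complex"
  proof -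
    obtain s g where s: "strict_mono s" and g: "holo_D_to_disc D g" "g x = 0"
      and "\<And>z. z \<in> D \<Longrightarrow> (\<lambda>n. moebius (G (s n) x) (G (s n) z)) \<longlonglongrightarrow> g z"
      and lim: "\<And>z h. z \<in> D \<Longrightarrow> (\<lambda>n. frechet_derivative (moebius (G (s n) x) \<circ> G (s n)) (at z) h)
                          \<longlonglongrightarrow> frechet_derivative g (at z) h"
      by (rule holo_D_to_disc_normalised_limit[where G=G, OF D G x]) blast
    have "(\<lambda>n. norm (frechet_derivative (moebius (G (s n) x) \<circ> G (s n)) (at x) v))
            \<longlonglongrightarrow> poincare_metric (g x) (frechet_derivative g (at x) v)"
      using tendsto_norm[OF lim[OF x]] g(2) by (simp add: poincare_metric_def)
    then have "(\<lambda>n. poincare_metric (G (s n) x) (frechet_derivative (G (s n)) (at x) v))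
                 \<longlonglongrightarrow> poincare_metric (g x) (frechet_derivative g (at x) v)"
      by (simp add: poincare_metric_eq_norm_frechet_derivative_moebius[OF G x])
    with s g(1) show ?thesis by blast
  qed
  then obtain g where "holo_D_to_disc D g"
      "poincare_metric (g x) (frechet_derivative g (at x) v) =
         Sup {poincare_metric (g x) (frechet_derivative g (at x) v) |g. holo_D_to_disc D g}"
    by (rule Sup_attained_if_subsequence_limits[where F="\<lambda>g. poincare_metric (g x) (frechet_derivative g (at x) v)",
          OF holo_D_to_disc_const[where c=0, simplified] bdd])
  then show thesis using that[unfolded cara_metric_D_def] by blast
qed

definition holo_left_inverse :: "(complex^'n) set \<Rightarrow> (complex \<Rightarrow> complex^'n) \<Rightarrow> bool" where
  "holo_left_inverse D \<psi> \<longleftrightarrow> (\<exists>g. holo_D_to_disc D g \<and> (\<forall>\<zeta>\<in>ball 0 1. g (\<psi> \<zeta>) = \<zeta>))"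

lemma deriv_left_inverse_comp:
  assumes "\<forall>\<zeta>\<in>ball 0 1. g (\<psi> \<zeta>) = \<zeta>" "\<zeta> \<in> ball 0 1"
  shows "deriv (g \<circ> \<psi>) \<zeta> = 1"
proof -
  have "((g \<circ> \<psi>) has_field_derivative 1) (at \<zeta>)"
    by (rule has_field_derivative_transform_within_open[OF DERIV_ident open_ball assms(2)])
       (use assms(1) in simp)
  then show ?thesis by (rule DERIV_imp_deriv)
qed

locale embedded_disc =
  fixes D V :: "(complex^'n) set" and \<psi> :: "complex \<Rightarrow> complex^'n"
  assumes bounded_domain: "bounded_domain D" and submanifold: "disc_submanifold D V \<psi>"
begin

lemma V_subset_D: "V \<subseteq> D" using submanifold unfolding disc_submanifold_def by blast
lemma holo_disc_map_chart: "holo_disc_map \<psi>" using submanifold unfolding disc_submanifold_def by blast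
lemma chart_image: "\<psi> ` ball 0 1 = V" using submanifold unfolding disc_submanifold_def by blast
lemma inj_on_chart: "inj_on \<psi> (ball 0 1)" using submanifold unfolding disc_submanifold_def by blast
lemma chart_deriv_nonzero: "\<zeta> \<in> ball 0 1 \<Longrightarrow> disc_map_deriv \<psi> \<zeta> \<noteq> 0"
  using submanifold unfolding disc_submanifold_def by blast
lemma chart_image_subset_D: "\<psi> ` ball 0 1 \<subseteq> D" using V_subset_D chart_image by simp
lemma open_D: "open D" using bounded_domain unfolding bounded_domain_def by blast
lemma connected_D: "connected D" using bounded_domain unfolding bounded_domain_def by blast

lemma V_chart_cases: "x \<in> V \<Longrightarrow> \<exists>\<zeta>\<in>ball 0 1. x = \<psi> \<zeta>"
  using chart_image by auto

definition chart_inv :: "complex^'n \<Rightarrow> complex" where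
  "chart_inv = inv_into (ball 0 1) \<psi>"

lemma chart_inv_chart: "\<zeta> \<in> ball 0 1 \<Longrightarrow> chart_inv (\<psi> \<zeta>) = \<zeta>"
  unfolding chart_inv_def using inj_on_chart by (simp add: inv_into_f_f)

lemma chart_chart_inv: "x \<in> V \<Longrightarrow> \<psi> (chart_inv x) = x"
  unfolding chart_inv_def using chart_image by (simp add: f_inv_into_f)

lemma chart_inv_in_disc: "x \<in> V \<Longrightarrow> chart_inv x \<in> ball 0 1"
  unfolding chart_inv_def using chart_image by (metis inv_into_into)

lemma continuous_on_chart_inv: "continuous_on V chart_inv"
proof -
  obtain \<psi>' where h: "homeomorphism (ball 0 1) V \<psi> \<psi>'"
    using submanifold unfolding disc_submanifold_def by blast
  then have "continuous_on V \<psi>'" unfolding homeomorphism_def by blast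
  moreover have "\<psi>' x = chart_inv x" if "x \<in> V" for x
    using h that chart_chart_inv[OF that] chart_inv_in_disc[OF that]
    unfolding homeomorphism_def by metis
  ultimately show ?thesis by (rule continuous_on_eq)
qed

text \<open>Near each point of \<open>V\<close> some coordinate \<open>w $ i\<close> has nonzero derivative along \<open>\<psi>\<close>,
  so \<open>\<psi>\<^sup>-\<^sup>1\<close> is a holomorphic function of that single coordinate.\<close>

lemma chart_inv_locally_coordinate_function:
  assumes "x0 \<in> V"
  obtains i T h \<delta> where "open T" "h holomorphic_on T" "\<delta> > 0"
    "\<And>w. w \<in> V \<Longrightarrow> dist w x0 < \<delta> \<Longrightarrow> w $ i \<in> T \<and> h (w $ i) = chart_inv w"
proof -
  define \<zeta>0 where "\<zeta>0 = chart_inv x0"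
  have z0: "\<zeta>0 \<in> ball 0 1" using chart_inv_in_disc assms \<zeta>0_def by blast
  obtain i where "disc_map_deriv \<psi> \<zeta>0 $ i \<noteq> 0"
    using chart_deriv_nonzero[OF z0] by (auto simp: vec_eq_iff)
  then have dnz: "deriv (\<lambda>t. \<psi> t $ i) \<zeta>0 \<noteq> 0" by (simp add: disc_map_deriv_def)
  have holi: "(\<lambda>t. \<psi> t $ i) holomorphic_on ball 0 1"
    using holo_disc_map_chart unfolding holo_disc_map_def by blast
  obtain r where r: "r > 0" "ball \<zeta>0 r \<subseteq> ball 0 1" "inj_on (\<lambda>t. \<psi> t $ i) (ball \<zeta>0 r)"
    by (rule has_complex_derivative_locally_injective[OF holi z0 open_ball dnz])
  have holr: "(\<lambda>t. \<psi> t $ i) holomorphic_on ball \<zeta>0 r" using holi r(2) holomorphic_on_subset by blast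
  obtain h where h: "h holomorphic_on (\<lambda>t. \<psi> t $ i) ` ball \<zeta>0 r"
      "\<And>z. z \<in> ball \<zeta>0 r \<Longrightarrow> h (\<psi> z $ i) = z"
    by (rule holomorphic_has_inverse[OF holr open_ball r(3)]) blast
  have "\<exists>\<delta>>0. \<forall>w\<in>V. dist w x0 < \<delta> \<longrightarrow> dist (chart_inv w) (chart_inv x0) < r"
    using continuous_on_chart_inv assms r(1) unfolding continuous_on_iff by blast
  then obtain \<delta> where \<delta>: "\<delta> > 0" "\<And>w. w \<in> V \<Longrightarrow> dist w x0 < \<delta> \<Longrightarrow> dist (chart_inv w) \<zeta>0 < r"
    unfolding \<zeta>0_def by blast
  show ?thesis
  proof (rule that[OF open_mapping_thm3[OF holr open_ball r(3)] h(1) \<delta>(1)])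
    fix w assume w: "w \<in> V" "dist w x0 < \<delta>"
    then have cw: "chart_inv w \<in> ball \<zeta>0 r" using \<delta>(2) by (simp add: dist_commute)
    have wi: "w $ i = \<psi> (chart_inv w) $ i" using chart_chart_inv[OF w(1)] by simp
    show "w $ i \<in> (\<lambda>t. \<psi> t $ i) ` ball \<zeta>0 r \<and> h (w $ i) = chart_inv w"
      using image_eqI[where f="\<lambda>t. \<psi> t $ i", OF wi cw] h(2)[OF cw] wi by simp
  qed
qed

lemma holo_fun_chart_inv_comp:
  assumes "holo_map E \<rho>" "open E" "\<rho> ` E \<subseteq> V"
  shows "holo_fun E (\<lambda>z. chart_inv (\<rho> z))"
  unfolding holo_fun_def
proof
  fix z assume z: "z \<in> E"
  have "\<rho> z \<in> V" using z assms(3) by blast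
  then obtain i T h \<delta> where T: "open T" "h holomorphic_on T" "\<delta> > 0"
    "\<And>w. w \<in> V \<Longrightarrow> dist w (\<rho> z) < \<delta> \<Longrightarrow> w $ i \<in> T \<and> h (w $ i) = chart_inv w"
    by (rule chart_inv_locally_coordinate_function) blast
  obtain e where e: "e > 0" "\<And>z'. z' \<in> E \<Longrightarrow> dist z' z < e \<Longrightarrow> dist (\<rho> z') (\<rho> z) < \<delta>"
    using holo_map_imp_continuous_on[OF assms(1)] z T(3) unfolding continuous_on_iff by blast
  obtain e' where e': "e' > 0" "ball z e' \<subseteq> E" using assms(2) z open_contains_ball by blast
  define B where "B = ball z (min e e')"
  have B: "open B" "z \<in> B" "B \<subseteq> E" using e e' by (auto simp: B_def)
  have near: "\<rho> z' $ i \<in> T \<and> h (\<rho> z' $ i) = chart_inv (\<rho> z')" if "z' \<in> B" for z'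
  proof -
    have "z' \<in> E" using that B(3) by blast
    moreover have "dist z' z < e" using that by (simp add: B_def dist_commute)
    ultimately show ?thesis using e(2) assms(3) T(4) by blast
  qed
  have hol_i: "holo_fun B (\<lambda>z. \<rho> z $ i)"
    using assms(1) B(3) unfolding holo_map_def by (meson holo_fun_subset)
  then have "((h \<circ> (\<lambda>z. \<rho> z $ i)) has_derivative
       (\<lambda>k. deriv h (\<rho> z $ i) * frechet_derivative (\<lambda>z. \<rho> z $ i) (at z) k)) (at z)"
    by (rule holomorphic_comp_holo_fun_has_derivative[OF _ _ T(1,2) B(2)]) (use near in blast)
  then have "((\<lambda>z. chart_inv (\<rho> z)) has_derivative
       (\<lambda>k. deriv h (\<rho> z $ i) * frechet_derivative (\<lambda>z. \<rho> z $ i) (at z) k)) (at z)"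
    by (rule has_derivative_transform_within_open[OF _ B(1,2)]) (simp add: near)
  moreover have "deriv h (\<rho> z $ i) * frechet_derivative (\<lambda>z. \<rho> z $ i) (at z) (c *s x) =
      c * (deriv h (\<rho> z $ i) * frechet_derivative (\<lambda>z. \<rho> z $ i) (at z) x)" for c x
    using holo_funD(2)[OF hol_i B(2)] by simp
  ultimately show "\<exists>L. ((\<lambda>z. chart_inv (\<rho> z)) has_derivative L) (at z) \<and> (\<forall>c x. L (c *s x) = c * L x)"
    by (intro exI[of _ "\<lambda>k. deriv h (\<rho> z $ i) * frechet_derivative (\<lambda>z. \<rho> z $ i) (at z) k"]) simp
qed

lemma chart_inv_comp_holomorphic:
  assumes "holo_disc_map \<phi>" "\<phi> ` ball 0 1 \<subseteq> V"
  shows "(\<lambda>z. chart_inv (\<phi> z)) holomorphic_on ball 0 1"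
  unfolding holomorphic_on_open[OF open_ball]
proof
  fix z :: complex assume z: "z \<in> ball 0 1"
  have "\<phi> z \<in> V" using z assms(2) by blast
  then obtain i T h \<delta> where T: "open T" "h holomorphic_on T" "\<delta> > 0"
    "\<And>w. w \<in> V \<Longrightarrow> dist w (\<phi> z) < \<delta> \<Longrightarrow> w $ i \<in> T \<and> h (w $ i) = chart_inv w"
    by (rule chart_inv_locally_coordinate_function) blast
  obtain e where e: "e > 0" "\<And>z'. z' \<in> ball 0 1 \<Longrightarrow> dist z' z < e \<Longrightarrow> dist (\<phi> z') (\<phi> z) < \<delta>"
    using holo_disc_map_imp_continuous_on[OF assms(1)] z T(3) unfolding continuous_on_iff by blast
  obtain e' where e': "e' > 0" "ball z e' \<subseteq> ball 0 1" using z open_contains_ball open_ball by blast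
  define B where "B = ball z (min e e')"
  have B: "open B" "z \<in> B" "B \<subseteq> ball 0 1" using e e' by (auto simp: B_def)
  have near: "\<phi> z' $ i \<in> T \<and> h (\<phi> z' $ i) = chart_inv (\<phi> z')" if "z' \<in> B" for z'
  proof -
    have "z' \<in> ball 0 1" using that B(3) by blast
    moreover have "dist z' z < e" using that by (simp add: B_def dist_commute)
    ultimately show ?thesis using e(2) assms(2) T(4) by blast
  qed
  have "(\<lambda>z. \<phi> z $ i) holomorphic_on B"
    using assms(1) B(3) unfolding holo_disc_map_def by (meson holomorphic_on_subset)
  then have "(h \<circ> (\<lambda>z. \<phi> z $ i)) holomorphic_on B"
    by (rule holomorphic_on_compose_gen[OF _ T(2)]) (use near in blast)
  then have "((h \<circ> (\<lambda>z. \<phi> z $ i)) has_field_derivative deriv (h \<circ> (\<lambda>z. \<phi> z $ i)) z) (at z)"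
    using B by (intro holomorphic_derivI) auto
  then have "((\<lambda>z. chart_inv (\<phi> z)) has_field_derivative deriv (h \<circ> (\<lambda>z. \<phi> z $ i)) z) (at z)"
    by (rule has_field_derivative_transform_within_open[OF _ B(1,2)]) (simp add: near)
  then show "\<exists>f'. ((\<lambda>z. chart_inv (\<phi> z)) has_field_derivative f') (at z)" by blast
qed

lemma holo_V_to_disc_if_holo_D_to_disc: "holo_D_to_disc D g \<Longrightarrow> holo_V_to_disc \<psi> g"
  unfolding holo_D_to_disc_def holo_V_to_disc_def
  using chart_image V_subset_D
    holo_fun_comp_disc_map_holomorphic[OF _ holo_disc_map_chart chart_image_subset_D] by blast

lemma disc_self_map_comp_chart: "holo_V_to_disc \<psi> g \<Longrightarrow> disc_self_map (g \<circ> \<psi>)"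
  unfolding holo_V_to_disc_def disc_self_map_def by (auto simp: image_comp)

lemma holo_V_to_disc_chart_inv: "holo_V_to_disc \<psi> chart_inv"
proof -
  have "(chart_inv \<circ> \<psi>) holomorphic_on ball 0 1"
    by (rule holomorphic_transform[of id]) (auto simp: chart_inv_chart)
  then show ?thesis unfolding holo_V_to_disc_def using chart_inv_chart by auto
qed

lemma holo_V_to_disc_dist_le:
  assumes "holo_V_to_disc \<psi> g" "a \<in> ball 0 1" "b \<in> ball 0 1"
  shows "poincare_dist (g (\<psi> a)) (g (\<psi> b)) \<le> poincare_dist a b"
proof -
  interpret disc_self_map "g \<circ> \<psi>" using disc_self_map_comp_chart[OF assms(1)] .
  show ?thesis using schwarz_pick_dist[of a b] assms(2,3) by simp
qed

lemma bdd_above_cara_dist_D_set: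
  assumes "a \<in> ball 0 1" "b \<in> ball 0 1"
  shows "bdd_above {poincare_dist (g (\<psi> a)) (g (\<psi> b)) |g. holo_D_to_disc D g}"
  using holo_V_to_disc_dist_le[OF holo_V_to_disc_if_holo_D_to_disc assms]
  by (intro bdd_aboveI[where M="poincare_dist a b"]) blast

lemma cara_dist_D_le_poincare:
  assumes "a \<in> ball 0 1" "b \<in> ball 0 1"
  shows "cara_dist_D D (\<psi> a) (\<psi> b) \<le> poincare_dist a b"
  unfolding cara_dist_D_def
  by (rule cSup_least) (use holo_D_to_disc_const[where c=0, simplified]
      holo_V_to_disc_dist_le[OF holo_V_to_disc_if_holo_D_to_disc, OF _ assms] in blast)+

lemma poincare_dist_le_cara_dist_D:
  assumes "a \<in> ball 0 1" "b \<in> ball 0 1" "holo_D_to_disc D g"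
  shows "poincare_dist (g (\<psi> a)) (g (\<psi> b)) \<le> cara_dist_D D (\<psi> a) (\<psi> b)"
  unfolding cara_dist_D_def
  by (rule cSup_upper) (use assms(3) bdd_above_cara_dist_D_set[OF assms(1,2)] in blast)+

lemma cara_dist_V_eq_poincare:
  assumes "a \<in> ball 0 1" "b \<in> ball 0 1"
  shows "cara_dist_V \<psi> (\<psi> a) (\<psi> b) = poincare_dist a b"
  unfolding cara_dist_V_def
proof (rule cSup_eq_maximum)
  have "poincare_dist a b = poincare_dist (chart_inv (\<psi> a)) (chart_inv (\<psi> b))"
    using assms by (simp add: chart_inv_chart)
  then show "poincare_dist a b \<in> {poincare_dist (g (\<psi> a)) (g (\<psi> b)) |g. holo_V_to_disc \<psi> g}"
    using holo_V_to_disc_chart_inv by blast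
qed (use holo_V_to_disc_dist_le assms in blast)

lemma frechet_derivative_along_chart:
  assumes "holo_fun D g" "\<zeta> \<in> ball 0 1"
  shows "frechet_derivative g (at (\<psi> \<zeta>)) (c *s disc_map_deriv \<psi> \<zeta>) = c * deriv (g \<circ> \<psi>) \<zeta>"
proof -
  have "deriv (g \<circ> \<psi>) \<zeta> = frechet_derivative g (at (\<psi> \<zeta>)) (disc_map_deriv \<psi> \<zeta>)"
    by (rule DERIV_imp_deriv[OF holo_fun_comp_disc_map_has_field_derivative[OF assms(1)
          holo_disc_map_chart chart_image_subset_D assms(2)]])
  moreover have "\<psi> \<zeta> \<in> D" using chart_image_subset_D assms(2) by blast
  ultimately show ?thesis using holo_funD(2)[OF assms(1)] by simp
qed

lemma holo_D_to_disc_metric_le: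
  assumes "holo_D_to_disc D g" "\<zeta> \<in> ball 0 1"
  shows "poincare_metric (g (\<psi> \<zeta>)) (frechet_derivative g (at (\<psi> \<zeta>)) (c *s disc_map_deriv \<psi> \<zeta>))
           \<le> cmod c / (1 - (cmod \<zeta>)^2)"
proof -
  interpret disc_self_map "g \<circ> \<psi>"
    using disc_self_map_comp_chart[OF holo_V_to_disc_if_holo_D_to_disc[OF assms(1)]] .
  show ?thesis
    using schwarz_pick_metric[of \<zeta> c] frechet_derivative_along_chart[of g \<zeta> c] assms
    by (simp add: holo_D_to_disc_def)
qed

lemma bdd_above_cara_metric_D_set:
  assumes "\<zeta> \<in> ball 0 1"
  shows "bdd_above {poincare_metric (g (\<psi> \<zeta>)) (frechet_derivative g (at (\<psi> \<zeta>)) (c *s disc_map_deriv \<psi> \<zeta>)) |g.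
                      holo_D_to_disc D g}"
  using holo_D_to_disc_metric_le[OF _ assms]
  by (intro bdd_aboveI[where M="cmod c / (1 - (cmod \<zeta>)^2)"]) blast

lemma cara_metric_D_le_poincare:
  assumes "\<zeta> \<in> ball 0 1"
  shows "cara_metric_D D (\<psi> \<zeta>) (c *s disc_map_deriv \<psi> \<zeta>) \<le> cmod c / (1 - (cmod \<zeta>)^2)"
  unfolding cara_metric_D_def
  by (rule cSup_least) (use holo_D_to_disc_const[where c=0, simplified]
      holo_D_to_disc_metric_le[OF _ assms] in blast)+

lemma poincare_metric_le_cara_metric_D:
  assumes "\<zeta> \<in> ball 0 1" "holo_D_to_disc D g"
  shows "poincare_metric (g (\<psi> \<zeta>)) (frechet_derivative g (at (\<psi> \<zeta>)) (c *s disc_map_deriv \<psi> \<zeta>))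
           \<le> cara_metric_D D (\<psi> \<zeta>) (c *s disc_map_deriv \<psi> \<zeta>)"
  unfolding cara_metric_D_def
  by (rule cSup_upper) (use assms(2) in blast, rule bdd_above_cara_metric_D_set[OF assms(1)])

lemma cara_metric_V_eq_poincare:
  assumes "\<zeta> \<in> ball 0 1"
  shows "cara_metric_V \<psi> (\<psi> \<zeta>) (c *s disc_map_deriv \<psi> \<zeta>) = cmod c / (1 - (cmod \<zeta>)^2)"
  unfolding cara_metric_V_def
proof (rule cSup_eq_maximum)
  have "cmod c / (1 - (cmod \<zeta>)^2) = poincare_metric (chart_inv (\<psi> \<zeta>)) (c * deriv (chart_inv \<circ> \<psi>) \<zeta>)"
    using assms chart_inv_chart deriv_left_inverse_comp[of chart_inv \<psi>]
    by (simp add: poincare_metric_def chart_inv_chart)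
  then show "cmod c / (1 - (cmod \<zeta>)^2) \<in> {poincare_metric (g (\<psi> \<zeta>)) (c' * deriv (g \<circ> \<psi>) \<zeta>') |g c' \<zeta>'.
        holo_V_to_disc \<psi> g \<and> \<zeta>' \<in> ball 0 1 \<and> \<psi> \<zeta>' = \<psi> \<zeta> \<and> c *s disc_map_deriv \<psi> \<zeta> = c' *s disc_map_deriv \<psi> \<zeta>'}"
    using holo_V_to_disc_chart_inv assms by blast
next
  fix r assume "r \<in> {poincare_metric (g (\<psi> \<zeta>)) (c' * deriv (g \<circ> \<psi>) \<zeta>') |g c' \<zeta>'.
        holo_V_to_disc \<psi> g \<and> \<zeta>' \<in> ball 0 1 \<and> \<psi> \<zeta>' = \<psi> \<zeta> \<and> c *s disc_map_deriv \<psi> \<zeta> = c' *s disc_map_deriv \<psi> \<zeta>'}"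
  then obtain g c' \<zeta>' where g: "holo_V_to_disc \<psi> g" and z': "\<zeta>' \<in> ball 0 1" "\<psi> \<zeta>' = \<psi> \<zeta>"
      and cc: "c *s disc_map_deriv \<psi> \<zeta> = c' *s disc_map_deriv \<psi> \<zeta>'"
      and r: "r = poincare_metric (g (\<psi> \<zeta>)) (c' * deriv (g \<circ> \<psi>) \<zeta>')" by blast
  have "\<zeta>' = \<zeta>" using inj_on_chart z' assms by (meson inj_onD)
  then have "c' = c" using cc vec_smult_cancel_right chart_deriv_nonzero[OF assms] by metis
  interpret disc_self_map "g \<circ> \<psi>" using disc_self_map_comp_chart[OF g] .
  show "r \<le> cmod c / (1 - (cmod \<zeta>)\<^sup>2)"
    using schwarz_pick_metric[of \<zeta> c] assms r \<open>\<zeta>' = \<zeta>\<close> \<open>c' = c\<close> by simp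
qed

lemma tangent_V_chart: "\<zeta> \<in> ball 0 1 \<Longrightarrow> v \<in> tangent_V \<psi> (\<psi> \<zeta>) \<Longrightarrow> \<exists>c. v = c *s disc_map_deriv \<psi> \<zeta>"
  unfolding tangent_V_def using inj_on_chart by (auto dest: inj_onD)

lemma holo_left_inverse_if_restriction_invertible:
  assumes g: "holo_D_to_disc D g"
    and h: "h holomorphic_on ball 0 1" "h ` ball 0 1 \<subseteq> ball 0 1" "\<forall>\<zeta>\<in>ball 0 1. h ((g \<circ> \<psi>) \<zeta>) = \<zeta>"
  shows "holo_left_inverse D \<psi>"
proof -
  have "holo_fun D (h \<circ> g)"
    using g h(1) by (intro holo_fun_holomorphic_comp[OF _ _ open_ball]) (auto simp: holo_D_to_disc_def)
  moreover have "(h \<circ> g) ` D \<subseteq> ball 0 1" using h(2) g by (auto simp: holo_D_to_disc_def)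
  ultimately show ?thesis
    using h(3) unfolding holo_left_inverse_def holo_D_to_disc_def by (intro exI[of _ "h \<circ> g"]) auto
qed

lemma holo_retraction_if_holo_left_inverse:
  assumes "holo_left_inverse D \<psi>"
  shows "\<exists>\<rho>. holo_retraction D \<rho> \<and> \<rho> ` D = V"
proof -
  obtain g where g: "holo_D_to_disc D g" "\<And>\<zeta>. \<zeta> \<in> ball 0 1 \<Longrightarrow> g (\<psi> \<zeta>) = \<zeta>"
    using assms unfolding holo_left_inverse_def by blast
  have gD: "g ` D \<subseteq> ball 0 1" using g(1) by (simp add: holo_D_to_disc_def)
  have "holo_fun D ((\<lambda>t. \<psi> t $ i) \<circ> g)" for i
    using g(1) holo_disc_map_chart
    by (intro holo_fun_holomorphic_comp[OF _ gD open_ball]) (auto simp: holo_D_to_disc_def holo_disc_map_def)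
  then have "holo_map D (\<lambda>z. \<psi> (g z))" by (simp add: holo_map_def o_def)
  moreover have "(\<lambda>z. \<psi> (g z)) ` D = V"
  proof
    show "(\<lambda>z. \<psi> (g z)) ` D \<subseteq> V" using gD chart_image by auto
    show "V \<subseteq> (\<lambda>z. \<psi> (g z)) ` D"
    proof
      fix x assume "x \<in> V"
      then obtain \<zeta> where \<zeta>: "\<zeta> \<in> ball 0 1" "x = \<psi> \<zeta>" using V_chart_cases by blast
      then have "\<psi> \<zeta> \<in> D" using chart_image_subset_D by blast
      then show "x \<in> (\<lambda>z. \<psi> (g z)) ` D"
        using g(2)[OF \<zeta>(1)] \<zeta>(2) by (intro image_eqI[where x="\<psi> \<zeta>"]) simp_all
    qed
  qed
  moreover have "\<psi> (g (\<psi> (g z))) = \<psi> (g z)" if "z \<in> D" for z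
    using g(2) gD that by auto
  ultimately have "holo_retraction D (\<lambda>z. \<psi> (g z)) \<and> (\<lambda>z. \<psi> (g z)) ` D = V"
    using V_subset_D unfolding holo_retraction_def by auto
  then show ?thesis by blast
qed

lemma holo_left_inverse_if_holo_retraction:
  assumes r: "holo_retraction D \<rho>" "\<rho> ` D = V"
  shows "holo_left_inverse D \<psi>"
proof -
  have "holo_fun D (\<lambda>z. chart_inv (\<rho> z))"
    using r open_D by (intro holo_fun_chart_inv_comp) (auto simp: holo_retraction_def)
  moreover have "(\<lambda>z. chart_inv (\<rho> z)) ` D \<subseteq> ball 0 1" using chart_inv_in_disc r(2) by auto
  moreover have "chart_inv (\<rho> (\<psi> \<zeta>)) = \<zeta>" if "\<zeta> \<in> ball 0 1" for \<zeta>
  proof -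
    have "\<psi> \<zeta> \<in> \<rho> ` D" using that chart_image r(2) by blast
    then obtain w where "w \<in> D" "\<psi> \<zeta> = \<rho> w" by blast
    then have "\<rho> (\<psi> \<zeta>) = \<psi> \<zeta>" using r(1) unfolding holo_retraction_def by simp
    then show ?thesis using chart_inv_chart that by simp
  qed
  ultimately show ?thesis unfolding holo_left_inverse_def holo_D_to_disc_def by blast
qed

lemma cara_dist_eq_if_holo_left_inverse:
  assumes "holo_left_inverse D \<psi>" "x \<in> V" "y \<in> V"
  shows "cara_dist_D D x y = cara_dist_V \<psi> x y"
proof -
  obtain g where g: "holo_D_to_disc D g" "\<And>\<zeta>. \<zeta> \<in> ball 0 1 \<Longrightarrow> g (\<psi> \<zeta>) = \<zeta>"
    using assms(1) unfolding holo_left_inverse_def by blast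
  obtain a b where ab: "a \<in> ball 0 1" "b \<in> ball 0 1" "x = \<psi> a" "y = \<psi> b"
    using V_chart_cases assms(2,3) by blast
  have "poincare_dist a b \<le> cara_dist_D D x y"
    using poincare_dist_le_cara_dist_D[OF ab(1,2) g(1)] g(2) ab by simp
  then show ?thesis using cara_dist_D_le_poincare[OF ab(1,2)] cara_dist_V_eq_poincare[OF ab(1,2)] ab by simp
qed

lemma complex_geodesic_if_cara_dist_eq:
  assumes "\<forall>x\<in>V. \<forall>y\<in>V. cara_dist_D D x y = cara_dist_V \<psi> x y"
  shows "complex_geodesic D \<psi>"
  unfolding complex_geodesic_def
proof (intro conjI holo_disc_map_chart chart_image_subset_D ballI)
  fix \<zeta> \<eta> :: complex assume z: "\<zeta> \<in> ball 0 1" "\<eta> \<in> ball 0 1"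
  then have "\<psi> \<zeta> \<in> V" "\<psi> \<eta> \<in> V" using chart_image by auto
  then show "cara_dist_D D (\<psi> \<zeta>) (\<psi> \<eta>) = poincare_dist \<zeta> \<eta>"
    using assms cara_dist_V_eq_poincare[OF z] by simp
qed

text \<open>For a geodesic \<open>\<phi>\<close> onto \<open>V\<close>, the map \<open>\<psi>\<^sup>-\<^sup>1 \<circ> \<phi>\<close> is a holomorphic self-map of the disc,
  so Schwarz--Pick bounds \<open>c\<^sub>V\<close> by \<open>c\<^sub>D\<close>.\<close>

lemma cara_dist_eq_if_complex_geodesic:
  assumes "complex_geodesic D \<phi>" "\<phi> ` ball 0 1 = V" "x \<in> V" "y \<in> V"
  shows "cara_dist_D D x y = cara_dist_V \<psi> x y"
proof -
  have hp: "holo_disc_map \<phi>"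
    and geo: "\<And>\<zeta> \<eta>. \<zeta> \<in> ball 0 1 \<Longrightarrow> \<eta> \<in> ball 0 1 \<Longrightarrow> cara_dist_D D (\<phi> \<zeta>) (\<phi> \<eta>) = poincare_dist \<zeta> \<eta>"
    using assms(1) unfolding complex_geodesic_def by blast+
  define k where "k z = chart_inv (\<phi> z)" for z
  interpret k: disc_self_map k
    unfolding disc_self_map_def k_def using chart_inv_comp_holomorphic[OF hp] chart_inv_in_disc assms(2)
    by auto
  obtain \<zeta> \<eta> where ze: "\<zeta> \<in> ball 0 1" "\<eta> \<in> ball 0 1" "x = \<phi> \<zeta>" "y = \<phi> \<eta>"
    using assms(2-4) by auto
  have kz: "k \<zeta> \<in> ball 0 1" "k \<eta> \<in> ball 0 1" "\<psi> (k \<zeta>) = x" "\<psi> (k \<eta>) = y"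
    using ze assms(2) chart_inv_in_disc chart_chart_inv by (auto simp: k_def)
  have "cara_dist_D D x y = poincare_dist \<zeta> \<eta>" using geo ze by simp
  moreover have "poincare_dist (k \<zeta>) (k \<eta>) \<le> poincare_dist \<zeta> \<eta>" using k.schwarz_pick_dist ze by simp
  moreover have "cara_dist_V \<psi> x y = poincare_dist (k \<zeta>) (k \<eta>)"
    using cara_dist_V_eq_poincare[OF kz(1,2)] kz by simp
  moreover have "cara_dist_D D x y \<le> poincare_dist (k \<zeta>) (k \<eta>)"
    using cara_dist_D_le_poincare[OF kz(1,2)] kz by simp
  ultimately show ?thesis by simp
qed

lemma exists_distinct_points_in_V: "\<exists>x\<in>V. \<exists>y\<in>V. x \<noteq> y"
proof -
  have "\<psi> 0 \<noteq> \<psi> (1/2)" using inj_onD[OF inj_on_chart, of 0 "1/2"] by auto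
  moreover have "\<psi> 0 \<in> V" "\<psi> (1/2) \<in> V" using chart_image by auto
  ultimately show ?thesis by blast
qed

lemma holo_left_inverse_if_cara_dist_eq_at:
  assumes xy: "x \<in> V" "y \<in> V" "x \<noteq> y" and eq: "cara_dist_D D x y = cara_dist_V \<psi> x y"
  shows "holo_left_inverse D \<psi>"
proof -
  obtain a b where ab: "a \<in> ball 0 1" "b \<in> ball 0 1" "x = \<psi> a" "y = \<psi> b"
    using V_chart_cases xy(1,2) by blast
  obtain g where g: "holo_D_to_disc D g" "poincare_dist (g x) (g y) = cara_dist_D D x y"
    using cara_dist_D_extremal[OF open_D connected_D, of x y] xy V_subset_D
      bdd_above_cara_dist_D_set[OF ab(1,2)] ab by blast
  interpret disc_self_map "g \<circ> \<psi>"
    using disc_self_map_comp_chart[OF holo_V_to_disc_if_holo_D_to_disc[OF g(1)]] .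
  have "poincare_dist a b \<le> poincare_dist ((g \<circ> \<psi>) a) ((g \<circ> \<psi>) b)"
    using g(2) eq cara_dist_V_eq_poincare[OF ab(1,2)] ab by simp
  then show ?thesis
    using schwarz_pick_dist_rigid[of a b] ab xy(3) holo_left_inverse_if_restriction_invertible[OF g(1)]
    by auto
qed

lemma cara_metric_eq_if_holo_left_inverse:
  assumes "holo_left_inverse D \<psi>" "x \<in> V" "v \<in> tangent_V \<psi> x"
  shows "cara_metric_D D x v = cara_metric_V \<psi> x v"
proof -
  obtain g where g: "holo_D_to_disc D g" "\<forall>\<zeta>\<in>ball 0 1. g (\<psi> \<zeta>) = \<zeta>"
    using assms(1) unfolding holo_left_inverse_def by blast
  obtain \<zeta> where z: "\<zeta> \<in> ball 0 1" "x = \<psi> \<zeta>" using V_chart_cases assms(2) by blast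
  obtain c where c: "v = c *s disc_map_deriv \<psi> \<zeta>" using tangent_V_chart z assms(3) by blast
  have "poincare_metric (g (\<psi> \<zeta>)) (frechet_derivative g (at (\<psi> \<zeta>)) v) = cmod c / (1 - (cmod \<zeta>)^2)"
    using frechet_derivative_along_chart[of g \<zeta> c] deriv_left_inverse_comp[of g \<psi>, OF g(2) z(1)] g z(1) c
    by (simp add: poincare_metric_def holo_D_to_disc_def)
  then show ?thesis
    using poincare_metric_le_cara_metric_D[OF z(1) g(1), of c] cara_metric_D_le_poincare[OF z(1), of c]
      cara_metric_V_eq_poincare[OF z(1), of c] c z by simp
qed

lemma exists_nonzero_tangent_vector: "\<exists>x\<in>V. \<exists>v\<in>tangent_V \<psi> x. v \<noteq> 0"
proof -
  have "disc_map_deriv \<psi> 0 \<in> tangent_V \<psi> (\<psi> 0)"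
    unfolding tangent_V_def by (rule CollectI, rule exI[of _ 1], rule exI[of _ 0]) (simp add: vec_eq_iff)
  then show ?thesis using chart_deriv_nonzero[of 0] chart_image by auto
qed

lemma holo_left_inverse_if_cara_metric_eq_at:
  assumes xv: "x \<in> V" "v \<in> tangent_V \<psi> x" "v \<noteq> 0" and eq: "cara_metric_D D x v = cara_metric_V \<psi> x v"
  shows "holo_left_inverse D \<psi>"
proof -
  obtain \<zeta> where z: "\<zeta> \<in> ball 0 1" "x = \<psi> \<zeta>" using V_chart_cases xv(1) by blast
  obtain c where c: "v = c *s disc_map_deriv \<psi> \<zeta>" using tangent_V_chart z xv(2) by blast
  have "c \<noteq> 0" using xv(3) c by auto
  obtain g where g: "holo_D_to_disc D g"
      "poincare_metric (g x) (frechet_derivative g (at x) v) = cara_metric_D D x v"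
    using cara_metric_D_extremal[OF open_D connected_D, of x v] xv(1) V_subset_D
      bdd_above_cara_metric_D_set[OF z(1), of c] z c by blast
  interpret disc_self_map "g \<circ> \<psi>"
    using disc_self_map_comp_chart[OF holo_V_to_disc_if_holo_D_to_disc[OF g(1)]] .
  have "cmod c * (1 / (1 - (cmod \<zeta>)^2)) \<le> cmod c * poincare_metric ((g \<circ> \<psi>) \<zeta>) (deriv (g \<circ> \<psi>) \<zeta>)"
    using g eq cara_metric_V_eq_poincare[OF z(1), of c] frechet_derivative_along_chart[of g \<zeta> c] z c
    by (simp add: holo_D_to_disc_def poincare_metric_def norm_mult)
  then have "1 / (1 - (cmod \<zeta>)^2) \<le> poincare_metric ((g \<circ> \<psi>) \<zeta>) (deriv (g \<circ> \<psi>) \<zeta>)"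
    by (rule mult_left_le_imp_le) (use \<open>c \<noteq> 0\<close> in simp)
  then show ?thesis
    using schwarz_pick_metric_rigid[of \<zeta>] z holo_left_inverse_if_restriction_invertible[OF g(1)] by auto
qed

lemma holo_retraction_iff_holo_left_inverse:
  "(\<exists>\<rho>. holo_retraction D \<rho> \<and> \<rho> ` D = V) \<longleftrightarrow> holo_left_inverse D \<psi>"
  using holo_retraction_if_holo_left_inverse holo_left_inverse_if_holo_retraction by blast

lemma cara_dist_eq_on_V_iff_holo_left_inverse:
  "(\<forall>x\<in>V. \<forall>y\<in>V. cara_dist_D D x y = cara_dist_V \<psi> x y) \<longleftrightarrow> holo_left_inverse D \<psi>"
proof
  assume eq: "\<forall>x\<in>V. \<forall>y\<in>V. cara_dist_D D x y = cara_dist_V \<psi> x y"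
  obtain x y where "x \<in> V" "y \<in> V" "x \<noteq> y" using exists_distinct_points_in_V by blast
  with eq show "holo_left_inverse D \<psi>" by (intro holo_left_inverse_if_cara_dist_eq_at) auto
qed (intro ballI cara_dist_eq_if_holo_left_inverse)

lemma cara_dist_eq_at_pair_iff_holo_left_inverse:
  "(\<exists>x\<in>V. \<exists>y\<in>V. x \<noteq> y \<and> cara_dist_D D x y = cara_dist_V \<psi> x y) \<longleftrightarrow> holo_left_inverse D \<psi>"
  using holo_left_inverse_if_cara_dist_eq_at cara_dist_eq_on_V_iff_holo_left_inverse
    exists_distinct_points_in_V by metis

lemma complex_geodesic_iff_holo_left_inverse:
  "(\<exists>\<phi>. complex_geodesic D \<phi> \<and> \<phi> ` ball 0 1 = V) \<longleftrightarrow> holo_left_inverse D \<psi>"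
  unfolding cara_dist_eq_on_V_iff_holo_left_inverse[symmetric]
  using complex_geodesic_if_cara_dist_eq chart_image cara_dist_eq_if_complex_geodesic by metis

lemma cara_metric_eq_on_V_iff_holo_left_inverse:
  "(\<forall>x\<in>V. \<forall>v\<in>tangent_V \<psi> x. cara_metric_D D x v = cara_metric_V \<psi> x v) \<longleftrightarrow> holo_left_inverse D \<psi>"
proof
  assume eq: "\<forall>x\<in>V. \<forall>v\<in>tangent_V \<psi> x. cara_metric_D D x v = cara_metric_V \<psi> x v"
  obtain x v where "x \<in> V" "v \<in> tangent_V \<psi> x" "v \<noteq> 0" using exists_nonzero_tangent_vector by blast
  with eq show "holo_left_inverse D \<psi>" by (intro holo_left_inverse_if_cara_metric_eq_at) auto
qed (intro ballI cara_metric_eq_if_holo_left_inverse)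

lemma cara_metric_eq_at_vector_iff_holo_left_inverse:
  "(\<exists>x\<in>V. \<exists>v\<in>tangent_V \<psi> x. v \<noteq> 0 \<and> cara_metric_D D x v = cara_metric_V \<psi> x v) \<longleftrightarrow>
     holo_left_inverse D \<psi>"
  using holo_left_inverse_if_cara_metric_eq_at cara_metric_eq_on_V_iff_holo_left_inverse
    exists_nonzero_tangent_vector by metis

end

theorem theorem14p2:
  fixes D V :: "(complex^'n) set" and \<psi> :: "complex \<Rightarrow> complex^'n"
  assumes "bounded_domain D" and "disc_submanifold D V \<psi>"
  shows "((\<exists>\<rho>. holo_retraction D \<rho> \<and> \<rho> ` D = V) \<longleftrightarrow>
          (\<exists>\<phi>. complex_geodesic D \<phi> \<and> \<phi> ` ball 0 1 = V)) \<and>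
         ((\<exists>\<phi>. complex_geodesic D \<phi> \<and> \<phi> ` ball 0 1 = V) \<longleftrightarrow>
          (\<forall>x\<in>V. \<forall>y\<in>V. cara_dist_D D x y = cara_dist_V \<psi> x y)) \<and>
         ((\<forall>x\<in>V. \<forall>y\<in>V. cara_dist_D D x y = cara_dist_V \<psi> x y) \<longleftrightarrow>
          (\<exists>x\<in>V. \<exists>y\<in>V. x \<noteq> y \<and> cara_dist_D D x y = cara_dist_V \<psi> x y)) \<and>
         ((\<exists>x\<in>V. \<exists>y\<in>V. x \<noteq> y \<and> cara_dist_D D x y = cara_dist_V \<psi> x y) \<longleftrightarrow>
          (\<forall>x\<in>V. \<forall>v\<in>tangent_V \<psi> x. cara_metric_D D x v = cara_metric_V \<psi> x v)) \<and>
         ((\<forall>x\<in>V. \<forall>v\<in>tangent_V \<psi> x. cara_metric_D D x v = cara_metric_V \<psi> x v) \<longleftrightarrow>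
          (\<exists>x\<in>V. \<exists>v\<in>tangent_V \<psi> x. v \<noteq> 0 \<and> cara_metric_D D x v = cara_metric_V \<psi> x v))"
proof -
  interpret embedded_disc D V \<psi> using assms by unfold_locales
  show ?thesis
    unfolding holo_retraction_iff_holo_left_inverse complex_geodesic_iff_holo_left_inverse
      cara_dist_eq_on_V_iff_holo_left_inverse cara_dist_eq_at_pair_iff_holo_left_inverse
      cara_metric_eq_on_V_iff_holo_left_inverse cara_metric_eq_at_vector_iff_holo_left_inverse
    by simp
qed

end
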